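(* Let $\Gamma$ be a gain operator on $\ell^\infty_+(\mathcal I)$ with $|\mathcal I|<\infty$, and assume the functions $\mu_i$ are uniformly continuous. Then the following are equivalent: (a) there is $\rho\in\mathcal K_\infty$ such that $\Gamma_\rho$ satisfies the NJI condition; (b) there is $\rho\in\mathcal K_\infty$ such that $\Gamma_\rho$ satisfies the uniform NJI condition; (c) there is $\rho\in\mathcal K_\infty$ such that $\Gamma_\rho$ satisfies the $\oplus$-MBI property; (d) there exists a path of strict decay for $\Gamma$; (e) there is $\rho\in\mathcal K_\infty$ such that $\Sigma(\Gamma_\rho)$ is UGAS.
   Context: Let $\mathcal I$ be a nonempty countable index set; $\ell^\infty_+(\mathcal I)$ is the cone of nonnegative real families $s=(s_i)_{i\in\mathcal I}$ with $\|s\|:=\sup_i|s_i|<\infty$, ordered componentwise; $s>0$ means $s\ge0$, $s\ne0$; $\mathbf 1$ is the all-ones vector; $\oplus$ is the componentwise maximum. $\mathcal K$: continuous strictly increasing $\gamma:\mathbb R_+\to\mathbb R_+$ with $\gamma(0)=0$; $\mathcal K_\infty$: unbounded elements of $\mathcal K$, acting componentwise; $\mathcal{KL}$: continuous $\beta$ with $\beta(\cdot,t)\in\mathcal K$ and $\beta(r,\cdot)$ continuous strictly decreasing to $0$ for $r>0$. For $\mathcal J\subset\mathcal I$, $s_{|\mathcal J}$ agrees with $s$ on $\mathcal J$ and is $0$ elsewhere. Gain operator: for each $i$ a finite (possibly empty) $\mathcal I_i\subset\mathcal I\setminus\{i\}$; directed graph $\mathcal G$ with vertices $\mathcal I$ and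 edges $ji$, $j\in\mathcal I_i$; a pointwise equicontinuous family $\gamma_{ij}\in\mathcal K_\infty$ ($ji\in E(\mathcal G)$); functions $\mu_i:\ell^\infty_+(\mathcal I)\to[0,\infty]$ with (M1) some $\xi\in\mathcal K_\infty$ has $\mu_i(0)=0$, $\mu_i(s)\ge\xi(\|s\|)$; (M2) $\mu_i$ monotone; (M3) for each finite $\mathcal J$, $\mu_i$ restricted to vectors vanishing off $\mathcal J$ is finite-valued and continuous; (M4) for each norm-bounded $A$ and $\varepsilon>0$ there is $\delta>0$ with $\sup_i|\mu_i(s_{|\mathcal I_i})-\mu_i(s^0_{|\mathcal I_i})|\le\varepsilon$ whenever $s^0\in A$, $\|s-s^0\|\le\delta$. $\Gamma_i(s):=\mu_i([\gamma_{ij}(s_j)]_{j\in\mathcal I_i})$ (argument zero outside $\mathcal I_i$). $\Gamma_\rho:=(\mathrm{id}+\rho)\circ\Gamma$. $\mathcal N^-_i(n)$: vertices $j$ with a directed path from $j$ to $i$ of length at most $n$ ($\mathcal N^-_i(0)=\{i\}$). For monotone $T$: NJI condition: $T(s)\ge s$ fails for all $s>0$; uniform NJI condition: for all $r,\varepsilon>0$ there are $n\in\mathbb N$, $\delta>0$ such that for all $s$, $i$ with $s_i\ge\varepsilon$, $\|s\|\le r$ there is $j\in\mathcal N^-_i(n)$ with $s_j\ge\delta$, $T_j(s)<s_j$; $\oplus$-MBI property: there is $\varphi\in\mathcal K_\infty$ with $s\le b\oplus T(s)\Rightarrow\|s\|\le\varphi(\|b\|)$ for all $s,b$; $\Sigma(T)$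 is the system $s^{n+1}=T(s^n)$, UGAS if $\|T^n(s)\|\le\beta(\|s\|,n)$ for some $\beta\in\mathcal{KL}$. A path of strict decay for $\Gamma$ is a map $\sigma:\mathbb R_+\to\ell^\infty_+(\mathcal I)$ such that: (i) for some $\rho\in\mathcal K_\infty$, $\Gamma_\rho(\sigma(r))\le\sigma(r)$ for all $r\ge0$; (ii) $\varphi_{\min}(r)\mathbf 1\le\sigma(r)\le\varphi_{\max}(r)\mathbf 1$ for some $\varphi_{\min},\varphi_{\max}\in\mathcal K_\infty$; (iii) each $\sigma_i\in\mathcal K_\infty$; (iv) for each compact $K\subset(0,\infty)$ there are $0<l\le L$ with $l|r_1-r_2|\le|\sigma_i^{-1}(r_1)-\sigma_i^{-1}(r_2)|\le L|r_1-r_2|$ for all $r_1,r_2\in K$, $i\in\mathcal I$. *)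

theory Defs
  imports "HOL-Analysis.Analysis"
begin

definition nonneg :: "('i \<Rightarrow> real) \<Rightarrow> bool" where
  "nonneg s \<longleftrightarrow> (\<forall>i. 0 \<le> s i)"

definition pos_vec :: "('i \<Rightarrow> real) \<Rightarrow> bool" where
  "pos_vec s \<longleftrightarrow> nonneg s \<and> s \<noteq> (\<lambda>_. 0)"

definition supn :: "('i::finite \<Rightarrow> real) \<Rightarrow> real" where
  "supn s = (MAX i. \<bar>s i\<bar>)"

definition restr :: "'i set \<Rightarrow> ('i \<Rightarrow> real) \<Rightarrow> ('i \<Rightarrow> real)" where
  "restr J s = (\<lambda>i. if i \<in> J then s i else 0)"

definition vmax :: "('i \<Rightarrow> real) \<Rightarrow> ('i \<Rightarrow> real) \<Rightarrow> ('i \<Rightarrow> real)" where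
  "vmax a b = (\<lambda>i. max (a i) (b i))"

definition class_K :: "(real \<Rightarrow> real) \<Rightarrow> bool" where
  "class_K g \<longleftrightarrow> continuous_on {0..} g \<and> strict_mono_on {0..} g \<and> g 0 = 0"

definition class_Kinf :: "(real \<Rightarrow> real) \<Rightarrow> bool" where
  "class_Kinf g \<longleftrightarrow> class_K g \<and> (\<forall>M. \<exists>r\<ge>0. M < g r)"

definition class_KL :: "(real \<Rightarrow> real \<Rightarrow> real) \<Rightarrow> bool" where
  "class_KL \<beta> \<longleftrightarrow> continuous_on ({0..} \<times> {0..}) (\<lambda>(r,t). \<beta> r t)
     \<and> (\<forall>t\<ge>0. class_K (\<lambda>r. \<beta> r t))
     \<and> (\<forall>r>0. continuous_on {0..} (\<beta> r) \<and>
              (\<forall>t1 t2. 0 \<le> t1 \<longrightarrow> t1 < t2 \<longrightarrow> \<beta> r t2 < \<beta> r t1) \<and>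
              (\<beta> r \<longlongrightarrow> 0) at_top)"

definition edges :: "('i \<Rightarrow> 'i set) \<Rightarrow> ('i \<times> 'i) set" where
  "edges Iset = {(j, i). j \<in> Iset i}"

definition in_nbhd :: "('i \<Rightarrow> 'i set) \<Rightarrow> 'i \<Rightarrow> nat \<Rightarrow> 'i set" where
  "in_nbhd Iset i n = {j. \<exists>k\<le>n. (j, i) \<in> (edges Iset) ^^ k}"

definition gain_operator ::
  "('i::finite \<Rightarrow> 'i set) \<Rightarrow> ('i \<Rightarrow> 'i \<Rightarrow> real \<Rightarrow> real) \<Rightarrow> ('i \<Rightarrow> ('i \<Rightarrow> real) \<Rightarrow> real) \<Rightarrow> bool" where
  "gain_operator Iset \<gamma> \<mu> \<longleftrightarrow>
     (\<forall>i. finite (Iset i) \<and> i \<notin> Iset i)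
   \<and> (\<forall>i. \<forall>j\<in>Iset i. class_Kinf (\<gamma> i j))
   \<comment> \<open>pointwise equicontinuity of the family (gamma_ij)\<close>
   \<and> (\<forall>r\<ge>0. \<forall>\<epsilon>>0. \<exists>\<delta>>0. \<forall>i. \<forall>j\<in>Iset i. \<forall>r'\<ge>0.
          \<bar>r - r'\<bar> \<le> \<delta> \<longrightarrow> \<bar>\<gamma> i j r - \<gamma> i j r'\<bar> \<le> \<epsilon>)
   \<comment> \<open>values in [0,infinity): finite by (M3) since the index set is finite\<close>
   \<and> (\<forall>i s. nonneg s \<longrightarrow> 0 \<le> \<mu> i s)
   \<comment> \<open>(M1)\<close>
   \<and> (\<exists>\<xi>. class_Kinf \<xi> \<and> (\<forall>i. \<mu> i (\<lambda>_. 0) = 0 \<and>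
          (\<forall>s. nonneg s \<longrightarrow> \<xi> (supn s) \<le> \<mu> i s)))
   \<comment> \<open>(M2)\<close>
   \<and> (\<forall>i s t. nonneg s \<longrightarrow> nonneg t \<longrightarrow> (\<forall>k. s k \<le> t k) \<longrightarrow> \<mu> i s \<le> \<mu> i t)
   \<comment> \<open>(M3): continuity on vectors vanishing off a finite set J\<close>
   \<and> (\<forall>i J s0. finite J \<longrightarrow> nonneg s0 \<longrightarrow> (\<forall>k. k \<notin> J \<longrightarrow> s0 k = 0) \<longrightarrow>
          (\<forall>\<epsilon>>0. \<exists>\<delta>>0. \<forall>s. nonneg s \<longrightarrow> (\<forall>k. k \<notin> J \<longrightarrow> s k = 0) \<longrightarrow>
             supn (\<lambda>k. s k - s0 k) \<le> \<delta> \<longrightarrow> \<bar>\<mu> i s - \<mu> i s0\<bar> \<le> \<epsilon>))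
   \<comment> \<open>(M4)\<close>
   \<and> (\<forall>A. (\<forall>s\<in>A. nonneg s) \<longrightarrow> (\<exists>C. \<forall>s\<in>A. supn s \<le> C) \<longrightarrow>
          (\<forall>\<epsilon>>0. \<exists>\<delta>>0. \<forall>s0\<in>A. \<forall>s. nonneg s \<longrightarrow> supn (\<lambda>k. s k - s0 k) \<le> \<delta> \<longrightarrow>
             (\<forall>i. \<bar>\<mu> i (restr (Iset i) s) - \<mu> i (restr (Iset i) s0)\<bar> \<le> \<epsilon>)))"

definition unif_cont_mu :: "('i::finite \<Rightarrow> ('i \<Rightarrow> real) \<Rightarrow> real) \<Rightarrow> bool" where
  "unif_cont_mu \<mu> \<longleftrightarrow> (\<forall>i. \<forall>\<epsilon>>0. \<exists>\<delta>>0. \<forall>s t. nonneg s \<longrightarrow> nonneg t \<longrightarrow>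
       supn (\<lambda>k. s k - t k) \<le> \<delta> \<longrightarrow> \<bar>\<mu> i s - \<mu> i t\<bar> \<le> \<epsilon>)"

definition Gam :: "('i \<Rightarrow> 'i set) \<Rightarrow> ('i \<Rightarrow> 'i \<Rightarrow> real \<Rightarrow> real) \<Rightarrow> ('i \<Rightarrow> ('i \<Rightarrow> real) \<Rightarrow> real)
                    \<Rightarrow> ('i \<Rightarrow> real) \<Rightarrow> ('i \<Rightarrow> real)" where
  "Gam Iset \<gamma> \<mu> s = (\<lambda>i. \<mu> i (\<lambda>j. if j \<in> Iset i then \<gamma> i j (s j) else 0))"

definition Gam_rho :: "(real \<Rightarrow> real) \<Rightarrow> ('i \<Rightarrow> 'i set) \<Rightarrow> ('i \<Rightarrow> 'i \<Rightarrow> real \<Rightarrow> real)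
                    \<Rightarrow> ('i \<Rightarrow> ('i \<Rightarrow> real) \<Rightarrow> real) \<Rightarrow> ('i \<Rightarrow> real) \<Rightarrow> ('i \<Rightarrow> real)" where
  "Gam_rho \<rho> Iset \<gamma> \<mu> s = (\<lambda>i. Gam Iset \<gamma> \<mu> s i + \<rho> (Gam Iset \<gamma> \<mu> s i))"

definition NJI :: "(('i \<Rightarrow> real) \<Rightarrow> ('i \<Rightarrow> real)) \<Rightarrow> bool" where
  "NJI T \<longleftrightarrow> (\<forall>s. pos_vec s \<longrightarrow> \<not> (\<forall>i. s i \<le> T s i))"

definition uniform_NJI :: "('i::finite \<Rightarrow> 'i set) \<Rightarrow> (('i \<Rightarrow> real) \<Rightarrow> ('i \<Rightarrow> real)) \<Rightarrow> bool" where
  "uniform_NJI Iset T \<longleftrightarrow> (\<forall>r>0. \<forall>\<epsilon>>0. \<exists>n::nat. \<exists>\<delta>>0. \<forall>s i.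
      nonneg s \<longrightarrow> \<epsilon> \<le> s i \<longrightarrow> supn s \<le> r \<longrightarrow>
      (\<exists>j\<in>in_nbhd Iset i n. \<delta> \<le> s j \<and> T s j < s j))"

definition oplus_MBI :: "(('i::finite \<Rightarrow> real) \<Rightarrow> ('i \<Rightarrow> real)) \<Rightarrow> bool" where
  "oplus_MBI T \<longleftrightarrow> (\<exists>\<phi>. class_Kinf \<phi> \<and> (\<forall>s b. nonneg s \<longrightarrow> nonneg b \<longrightarrow>
      (\<forall>i. s i \<le> vmax b (T s) i) \<longrightarrow> supn s \<le> \<phi> (supn b)))"

definition UGAS :: "(('i::finite \<Rightarrow> real) \<Rightarrow> ('i \<Rightarrow> real)) \<Rightarrow> bool" where
  "UGAS T \<longleftrightarrow> (\<exists>\<beta>. class_KL \<beta> \<and> (\<forall>s n. nonneg s \<longrightarrow> supn ((T ^^ n) s) \<le> \<beta> (supn s) (real n)))"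

definition path_strict_decay ::
  "('i::finite \<Rightarrow> 'i set) \<Rightarrow> ('i \<Rightarrow> 'i \<Rightarrow> real \<Rightarrow> real) \<Rightarrow> ('i \<Rightarrow> ('i \<Rightarrow> real) \<Rightarrow> real)
     \<Rightarrow> (real \<Rightarrow> 'i \<Rightarrow> real) \<Rightarrow> bool" where
  "path_strict_decay Iset \<gamma> \<mu> \<sigma> \<longleftrightarrow>
     (\<exists>\<rho>. class_Kinf \<rho> \<and> (\<forall>r\<ge>0. \<forall>i. Gam_rho \<rho> Iset \<gamma> \<mu> (\<sigma> r) i \<le> \<sigma> r i))
   \<and> (\<exists>\<phi>min \<phi>max. class_Kinf \<phi>min \<and> class_Kinf \<phi>max \<and>
        (\<forall>r\<ge>0. \<forall>i. \<phi>min r \<le> \<sigma> r i \<and> \<sigma> r i \<le> \<phi>max r))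
   \<and> (\<forall>i. class_Kinf (\<lambda>r. \<sigma> r i))
   \<and> (\<forall>K. compact K \<longrightarrow> K \<subseteq> {0<..} \<longrightarrow>
        (\<exists>l L. 0 < l \<and> l \<le> L \<and> (\<forall>r1\<in>K. \<forall>r2\<in>K. \<forall>i.
           l * \<bar>r1 - r2\<bar> \<le> \<bar>the_inv_into {0..} (\<lambda>r. \<sigma> r i) r1 - the_inv_into {0..} (\<lambda>r. \<sigma> r i) r2\<bar>
         \<and> \<bar>the_inv_into {0..} (\<lambda>r. \<sigma> r i) r1 - the_inv_into {0..} (\<lambda>r. \<sigma> r i) r2\<bar> \<le> L * \<bar>r1 - r2\<bar>)))"

end

theory Submission
  imports Defs
begin

text \<open>
  Each of (b)--(e) yields (a) at once: a vector \<open>s > 0\<close> with \<open>s \<le> \<Gamma>\<^sub>\<rho>(s)\<close> contradicts a strict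
  decrease at some index, the \<open>\<oplus>\<close>-MBI estimate with input \<open>0\<close>, or the decay of the iterates
  \<open>\<Gamma>\<^sub>\<rho>\<^sup>n(s) \<ge> s\<close>; touching a path of strict decay \<open>\<sigma>\<close> from below at some index forces
  \<open>\<Gamma>(\<sigma>(r)) = 0\<close> there for the gain \<open>\<rho> / 2\<close>.

  Conversely, (a) yields a chain \<open>y\<^sub>k\<close>, \<open>k \<in> \<int>\<close>, of positive vectors increasing strictly from \<open>0\<close> to
  \<open>\<infinity>\<close> with \<open>\<Gamma>\<^sub>\<rho>\<^sub>2(y\<^sub>k\<^sub>+\<^sub>1) \<le> y\<^sub>k\<close>. Interpolating it linearly between the dyadic points \<open>2\<^sup>k\<close> gives a
  path of strict decay, and comparing an arbitrary vector with its levels gives the \<open>\<oplus>\<close>-MBI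
  property, UGAS and the uniform NJI condition. For the chain put \<open>\<rho>\<^sub>1(x) = \<rho>(x/2)/2\<close>. The NJI
  condition and the uniform continuity of \<open>\<mu>\<close> make the sets \<open>{s. s \<le> r \<oplus> \<Gamma>\<^sub>\<rho>\<^sub>1(s)}\<close> bounded (a
  large vector in them has a gap in its entries, and the entries above the gap violate NJI) and
  shrink them to \<open>{0}\<close> as \<open>r \<rightarrow> 0\<close>. This gives a 1-Lipschitz scale \<open>\<kappa>\<close> such that
  \<open>G(x) = max(\<Gamma>\<^sub>\<rho>\<^sub>1(x), x/2, \<kappa>(\<parallel>x\<parallel>))\<close> has no nonzero \<open>x \<le> G(x)\<close>. By compactness some \<open>x\<close>
  with \<open>G(x) \<le> x\<close> has a backward orbit under \<open>G\<close>, which with its forward orbit is a chain; averaging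
  with \<open>\<Gamma>\<^sub>\<rho>\<^sub>2\<close>, \<open>\<rho>\<^sub>2 = \<rho>\<^sub>1/2\<close>, makes it strictly increasing.
\<close>

section \<open>Sup norm, comparison functions and pointwise limits\<close>

lemma abs_le_supn: "\<bar>s i\<bar> \<le> supn s"
  unfolding supn_def by (rule Max_ge) auto

lemma le_supn: "s i \<le> supn s"
  using abs_le_supn[of s i] by linarith

lemma supn_nonneg: "0 \<le> supn s"
  using abs_le_supn[of s undefined] by linarith

lemma supn_attained: "\<exists>i. supn s = \<bar>s i\<bar>"
proof -
  have "supn s \<in> (\<lambda>i. \<bar>s i\<bar>) ` UNIV"
    unfolding supn_def by (rule Max_in) auto
  then show ?thesis by auto
qed

lemma supn_attained_nonneg: "nonneg s \<Longrightarrow> \<exists>i. s i = supn s"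
  using supn_attained[of s] by (auto simp: nonneg_def)

lemma supn_le_iff: "supn s \<le> c \<longleftrightarrow> (\<forall>i. \<bar>s i\<bar> \<le> c)"
  using abs_le_supn[of s] supn_attained[of s] by (metis order_trans)

lemma supn_less_iff: "supn s < c \<longleftrightarrow> (\<forall>i. \<bar>s i\<bar> < c)"
  using abs_le_supn[of s] supn_attained[of s] by (metis order_le_less_trans)

lemma supn_const [simp]: "supn (\<lambda>_. c) = \<bar>c\<bar>"
  using supn_attained[of "\<lambda>_. c"] by auto

lemma supn_eq_0_iff: "supn s = 0 \<longleftrightarrow> s = (\<lambda>_. 0)"
proof
  show "supn s = 0 \<Longrightarrow> s = (\<lambda>_. 0)"
    using abs_le_supn[of s] by (auto simp: fun_eq_iff intro: antisym)
qed simp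

lemma supn_pos: "nonneg s \<Longrightarrow> s \<noteq> (\<lambda>_. 0) \<Longrightarrow> 0 < supn s"
  using supn_eq_0_iff supn_nonneg by (metis order_le_less)

lemma supn_mono: "nonneg s \<Longrightarrow> (\<forall>i. s i \<le> t i) \<Longrightarrow> supn s \<le> supn t"
  unfolding supn_le_iff nonneg_def using le_supn by (metis abs_of_nonneg order_trans)

lemma abs_supn_diff_le: "\<bar>supn a - supn b\<bar> \<le> supn (\<lambda>i. a i - b i)"
proof -
  have triangle: "supn a \<le> supn b + supn (\<lambda>i. a i - b i)" for a b :: "'a \<Rightarrow> real"
  proof -
    obtain i where "supn a = \<bar>a i\<bar>" using supn_attained by blast
    moreover have "\<bar>a i\<bar> \<le> \<bar>b i\<bar> + \<bar>a i - b i\<bar>" by linarith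
    ultimately show ?thesis using abs_le_supn[of b i] abs_le_supn[of "\<lambda>i. a i - b i" i] by simp
  qed
  have "supn (\<lambda>i. b i - a i) = supn (\<lambda>i. a i - b i)"
    unfolding supn_def by (simp add: abs_minus_commute)
  with triangle[of a b] triangle[of b a] show ?thesis by linarith
qed

lemma nonneg_zero [simp]: "nonneg (\<lambda>_. 0)"
  by (simp add: nonneg_def)

lemma nonneg_restr: "nonneg s \<Longrightarrow> nonneg (restr J s)"
  by (simp add: nonneg_def restr_def)

lemma class_K_mono: "class_K g \<Longrightarrow> 0 \<le> x \<Longrightarrow> x \<le> y \<Longrightarrow> g x \<le> g y"
  unfolding class_K_def strict_mono_on_def by (metis atLeast_iff order_le_less order_trans)

lemma class_K_strict_mono: "class_K g \<Longrightarrow> 0 \<le> x \<Longrightarrow> x < y \<Longrightarrow> g x < g y"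
  unfolding class_K_def strict_mono_on_def by auto

lemma class_K_0: "class_K g \<Longrightarrow> g 0 = 0"
  by (simp add: class_K_def)

lemma class_K_nonneg: "class_K g \<Longrightarrow> 0 \<le> x \<Longrightarrow> 0 \<le> g x"
  using class_K_mono[of g 0 x] by (simp add: class_K_0)

lemma class_K_pos: "class_K g \<Longrightarrow> 0 < x \<Longrightarrow> 0 < g x"
  using class_K_strict_mono[of g 0 x] by (simp add: class_K_0)

lemma class_K_continuous_on: "class_K g \<Longrightarrow> continuous_on {0..} g"
  by (simp add: class_K_def)

lemma class_K_tendsto:
  assumes "class_K g" "x \<longlonglongrightarrow> l" "\<forall>m. 0 \<le> x m" "0 \<le> l"
  shows "(\<lambda>m. g (x m)) \<longlonglongrightarrow> g l"
  using continuous_on_tendsto_compose[OF class_K_continuous_on[OF assms(1)] assms(2)] assms(3,4)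
  by auto

lemma class_Kinf_imp_class_K: "class_Kinf g \<Longrightarrow> class_K g"
  by (simp add: class_Kinf_def)

lemma class_Kinf_unbounded: "class_Kinf g \<Longrightarrow> \<exists>r\<ge>0. M < g r"
  by (simp add: class_Kinf_def)

lemma class_KinfI:
  assumes "continuous_on {0..} g" "\<And>x y. 0 \<le> x \<Longrightarrow> x < y \<Longrightarrow> g x < g y" "g 0 = 0"
    "\<And>M. \<exists>r\<ge>0. M < g r"
  shows "class_Kinf g"
  using assms unfolding class_Kinf_def class_K_def strict_mono_on_def by auto

lemma class_Kinf_comp:
  assumes f: "class_Kinf f" and g: "class_Kinf g"
  shows "class_Kinf (\<lambda>x. f (g x))"
proof (rule class_KinfI)
  have fK: "class_K f" and gK: "class_K g"
    using f g class_Kinf_imp_class_K by auto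
  show "continuous_on {0..} (\<lambda>x. f (g x))"
    by (rule continuous_on_compose2[OF class_K_continuous_on[OF fK] class_K_continuous_on[OF gK]])
      (use class_K_nonneg[OF gK] in auto)
  show "f (g x) < f (g y)" if "0 \<le> x" "x < y" for x y
    using that class_K_strict_mono[OF fK] class_K_strict_mono[OF gK] class_K_nonneg[OF gK] by blast
  show "f (g 0) = 0"
    using class_K_0[OF fK] class_K_0[OF gK] by simp
  show "\<exists>r\<ge>0. M < f (g r)" for M
  proof -
    obtain a where a: "a \<ge> 0" "M < f a" using class_Kinf_unbounded[OF f] by blast
    obtain r where r: "r \<ge> 0" "a < g r" using class_Kinf_unbounded[OF g] by blast
    show ?thesis using class_K_strict_mono[OF fK a(1) r(2)] a r by (intro exI[of _ r]) auto
  qed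
qed

lemma class_Kinf_mult:
  assumes "c > 0"
  shows "class_Kinf (\<lambda>x. c * x)"
proof (rule class_KinfI)
  show "continuous_on {0..} (\<lambda>x. c * x)"
    by (intro continuous_intros)
  show "\<exists>r\<ge>0. M < c * r" for M
    using assms by (intro exI[of _ "(\<bar>M\<bar> + 1) / c"]) auto
qed (use assms in auto)

lemma class_Kinf_scale: "class_Kinf f \<Longrightarrow> c > 0 \<Longrightarrow> class_Kinf (\<lambda>x. f (c * x))"
  using class_Kinf_comp class_Kinf_mult by blast

lemma class_Kinf_divide: "class_Kinf f \<Longrightarrow> c > 0 \<Longrightarrow> class_Kinf (\<lambda>x. f x / c)"
  using class_Kinf_comp[OF class_Kinf_mult[of "1 / c"]] by (simp add: divide_inverse_commute)

lemma class_Kinf_sum: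
  fixes f :: "'i::finite \<Rightarrow> real \<Rightarrow> real"
  assumes f: "\<And>i. class_Kinf (f i)"
  shows "class_Kinf (\<lambda>r. \<Sum>i\<in>UNIV. f i r)"
proof (rule class_KinfI)
  have K: "class_K (f i)" for i using f class_Kinf_imp_class_K by blast
  show "continuous_on {0..} (\<lambda>r. \<Sum>i\<in>UNIV. f i r)"
    by (intro continuous_on_sum) (use K class_K_continuous_on in blast)
  show "(\<Sum>i\<in>UNIV. f i a) < (\<Sum>i\<in>UNIV. f i b)" if "0 \<le> a" "a < b" for a b
    by (rule sum_strict_mono) (use that class_K_strict_mono[OF K] in auto)
  show "(\<Sum>i\<in>UNIV. f i 0) = 0"
    using class_K_0[OF K] by simp
  show "\<exists>r\<ge>0. M < (\<Sum>i\<in>UNIV. f i r)" for M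
  proof -
    obtain r where r: "r \<ge> 0" "M < f undefined r" using class_Kinf_unbounded f by blast
    have "f undefined r \<le> (\<Sum>i\<in>UNIV. f i r)"
      by (rule member_le_sum) (use class_K_nonneg[OF K] r in auto)
    then show ?thesis using r by (intro exI[of _ r]) auto
  qed
qed

lemma class_Kinf_image: "class_Kinf f \<Longrightarrow> f ` {0..} = {0..}"
proof
  assume f: "class_Kinf f"
  then have fK: "class_K f" by (rule class_Kinf_imp_class_K)
  show "f ` {0..} \<subseteq> {0..}" using class_K_nonneg[OF fK] by auto
  show "{0..} \<subseteq> f ` {0..}"
  proof
    fix y :: real assume "y \<in> {0..}"
    moreover obtain r where "r \<ge> 0" "y < f r" using class_Kinf_unbounded[OF f] by blast
    moreover have "continuous_on {0..r} f"
      using class_K_continuous_on[OF fK] by (rule continuous_on_subset) auto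
    ultimately obtain x where "0 \<le> x" "x \<le> r" "f x = y"
      using IVT'[of f 0 y r] class_K_0[OF fK] by auto
    then show "y \<in> f ` {0..}" by auto
  qed
qed

lemma class_Kinf_inj_on: "class_Kinf f \<Longrightarrow> inj_on f {0..}"
  using strict_mono_on_imp_inj_on class_Kinf_imp_class_K class_K_def by blast

abbreviation Kinv :: "(real \<Rightarrow> real) \<Rightarrow> real \<Rightarrow> real" where
  "Kinv f \<equiv> the_inv_into {0..} f"

lemma Kinv_f: "class_Kinf f \<Longrightarrow> x \<ge> 0 \<Longrightarrow> Kinv f (f x) = x"
  using the_inv_into_f_f class_Kinf_inj_on by fastforce

lemma f_Kinv: "class_Kinf f \<Longrightarrow> y \<ge> 0 \<Longrightarrow> f (Kinv f y) = y"
  using f_the_inv_into_f[OF class_Kinf_inj_on] class_Kinf_image by fastforce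

lemma Kinv_nonneg: "class_Kinf f \<Longrightarrow> y \<ge> 0 \<Longrightarrow> Kinv f y \<ge> 0"
  using the_inv_into_into[OF class_Kinf_inj_on, of f y "{0..}"] class_Kinf_image by fastforce

lemma class_Kinf_less_iff:
  "class_Kinf f \<Longrightarrow> x \<ge> 0 \<Longrightarrow> y \<ge> 0 \<Longrightarrow> f x < f y \<longleftrightarrow> x < y"
  by (meson class_K_mono class_K_strict_mono class_Kinf_imp_class_K not_le)

lemma class_Kinf_Kinv:
  assumes f: "class_Kinf f"
  shows "class_Kinf (Kinv f)"
proof (rule class_KinfI)
  have fK: "class_K f" using f by (rule class_Kinf_imp_class_K)
  show "Kinv f x < Kinv f y" if "0 \<le> x" "x < y" for x y
    using that class_Kinf_less_iff[OF f Kinv_nonneg[OF f] Kinv_nonneg[OF f], of x y] f_Kinv[OF f]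
    by simp
  show "Kinv f 0 = 0"
    using Kinv_f[OF f, of 0] class_K_0[OF fK] by simp
  show "\<exists>r\<ge>0. M < Kinv f r" for M
    using Kinv_f[OF f, of "\<bar>M\<bar> + 1"] class_K_nonneg[OF fK, of "\<bar>M\<bar> + 1"]
    by (intro exI[of _ "f (\<bar>M\<bar> + 1)"]) auto
  show "continuous_on {0..} (Kinv f)"
    unfolding continuous_on_eq_continuous_within
  proof
    fix y :: real assume y: "y \<in> {0..}"
    obtain n where n: "n \<ge> 0" "y < f n" using class_Kinf_unbounded[OF f] by blast
    have cont: "continuous_on {0..n} f"
      using class_K_continuous_on[OF fK] by (rule continuous_on_subset) auto
    have "f ` {0..n} = {0..f n}"
    proof
      show "f ` {0..n} \<subseteq> {0..f n}"
        using class_K_nonneg[OF fK] class_K_mono[OF fK] by auto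
      show "{0..f n} \<subseteq> f ` {0..n}"
        using IVT'[of f 0 _ n] cont n class_K_0[OF fK] by force
    qed
    moreover have "continuous_on (f ` {0..n}) (Kinv f)"
      using continuous_on_inv[OF cont compact_Icc] Kinv_f[OF f] by auto
    ultimately have "continuous (at y within {0..f n}) (Kinv f)"
      using y n unfolding continuous_on_eq_continuous_within by auto
    moreover have "at y within {0..} = at y within {0..f n}"
      by (rule at_within_nhd[of y "{..<f n}"]) (use n in auto)
    ultimately show "continuous (at y within {0..}) (Kinv f)" by simp
  qed
qed

definition pointwise_limit :: "(nat \<Rightarrow> 'i \<Rightarrow> real) \<Rightarrow> ('i \<Rightarrow> real) \<Rightarrow> bool" where
  "pointwise_limit x l \<longleftrightarrow> (\<forall>i. (\<lambda>m. x m i) \<longlonglongrightarrow> l i)"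

lemma pointwise_limit_supn_diff:
  fixes x :: "nat \<Rightarrow> 'i::finite \<Rightarrow> real"
  assumes "pointwise_limit x l"
  shows "(\<lambda>m. supn (\<lambda>i. x m i - l i)) \<longlonglongrightarrow> 0"
proof (rule tendstoI)
  fix e :: real assume e: "0 < e"
  have "\<forall>i. eventually (\<lambda>m. dist (x m i) (l i) < e) sequentially"
    using assms e unfolding pointwise_limit_def tendsto_iff by blast
  then have "eventually (\<lambda>m. \<forall>i. dist (x m i) (l i) < e) sequentially"
    by (simp add: eventually_all_finite)
  then show "eventually (\<lambda>m. dist (supn (\<lambda>i. x m i - l i)) 0 < e) sequentially"
    by eventually_elim (simp add: supn_less_iff supn_nonneg dist_real_def)
qed

lemma pointwise_limit_supn:
  fixes x :: "nat \<Rightarrow> 'i::finite \<Rightarrow> real"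
  assumes "pointwise_limit x l"
  shows "(\<lambda>m. supn (x m)) \<longlonglongrightarrow> supn l"
proof -
  have "(\<lambda>m. supn (x m) - supn l) \<longlonglongrightarrow> 0"
    by (rule Lim_null_comparison[OF _ pointwise_limit_supn_diff[OF assms]])
      (simp add: abs_supn_diff_le)
  then show ?thesis by (simp add: LIM_zero_iff)
qed

lemma pointwise_limit_subseq:
  "pointwise_limit x l \<Longrightarrow> strict_mono r \<Longrightarrow> pointwise_limit (x \<circ> r) l"
  unfolding pointwise_limit_def using LIMSEQ_subseq_LIMSEQ by (auto simp: o_def)

lemma pointwise_limit_Suc: "pointwise_limit x l \<Longrightarrow> pointwise_limit (\<lambda>m. x (Suc m)) l"
  unfolding pointwise_limit_def by (auto intro: LIMSEQ_Suc)

lemma pointwise_limit_const: "pointwise_limit (\<lambda>m. l) l"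
  by (simp add: pointwise_limit_def)

lemma pointwise_limit_unique: "pointwise_limit x l \<Longrightarrow> pointwise_limit x l' \<Longrightarrow> l = l'"
  unfolding pointwise_limit_def by (intro ext) (meson LIMSEQ_unique)

lemma pointwise_limit_le:
  "pointwise_limit x l \<Longrightarrow> pointwise_limit y l' \<Longrightarrow> (\<forall>m. x m i \<le> y m i) \<Longrightarrow> l i \<le> l' i"
  unfolding pointwise_limit_def by (meson LIMSEQ_le)

lemma pointwise_limit_ge_const: "pointwise_limit x l \<Longrightarrow> (\<forall>m. c \<le> x m i) \<Longrightarrow> c \<le> l i"
  unfolding pointwise_limit_def by (meson LIMSEQ_le_const)

lemma pointwise_limit_nonneg: "pointwise_limit x l \<Longrightarrow> (\<forall>m. nonneg (x m)) \<Longrightarrow> nonneg l"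
  unfolding nonneg_def by (meson pointwise_limit_ge_const)

lemma bounded_imp_pointwise_convergent_subseq:
  fixes x :: "nat \<Rightarrow> 'i::finite \<Rightarrow> real"
  assumes "\<forall>m. supn (x m) \<le> B"
  shows "\<exists>r l. strict_mono r \<and> pointwise_limit (x \<circ> r) l"
proof -
  define X where "X m = (vec_lambda (x m) :: real^'i)" for m
  have "norm (X m) \<le> real CARD('i) * B" for m
  proof -
    have "norm (X m) \<le> (\<Sum>i\<in>UNIV. \<bar>X m $ i\<bar>)" by (rule norm_le_l1_cart)
    also have "\<dots> \<le> (\<Sum>i\<in>(UNIV::'i set). B)"
      by (rule sum_mono) (use assms abs_le_supn in \<open>auto simp: X_def intro: order_trans\<close>)
    finally show ?thesis by simp
  qed
  then have "bounded (range X)" by (auto simp: bounded_iff)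
  then obtain l r where r: "strict_mono r" and l: "(X \<circ> r) \<longlonglongrightarrow> l"
    using bounded_imp_convergent_subsequence by blast
  have "pointwise_limit (x \<circ> r) (\<lambda>i. l $ i)"
    using tendsto_vec_nth[OF l] by (simp add: pointwise_limit_def X_def o_def)
  with r show ?thesis by blast
qed

lemma incseq_pointwise_convergent:
  fixes x :: "nat \<Rightarrow> 'i \<Rightarrow> real"
  assumes "\<And>m i. x m i \<le> x (Suc m) i" "\<And>m i. x m i \<le> B"
  shows "\<exists>l. pointwise_limit x l"
proof -
  have "\<exists>l. (\<lambda>m. x m i) \<longlonglongrightarrow> l" for i
  proof -
    have "incseq (\<lambda>m. x m i)" by (rule incseq_SucI) (rule assms(1))
    moreover have "bdd_above (range (\<lambda>m. x m i))" by (rule bdd_aboveI2) (rule assms(2))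
    ultimately show ?thesis using LIMSEQ_incseq_SUP by blast
  qed
  then show ?thesis unfolding pointwise_limit_def by metis
qed

lemma decseq_pointwise_convergent:
  fixes x :: "nat \<Rightarrow> 'i \<Rightarrow> real"
  assumes "\<And>m i. x (Suc m) i \<le> x m i" "\<And>m i. B \<le> x m i"
  shows "\<exists>l. pointwise_limit x l"
proof -
  have "\<exists>l. (\<lambda>m. x m i) \<longlonglongrightarrow> l" for i
  proof -
    have "decseq (\<lambda>m. x m i)" by (rule decseq_SucI) (rule assms(1))
    moreover have "bdd_below (range (\<lambda>m. x m i))" by (rule bdd_belowI2) (rule assms(2))
    ultimately show ?thesis using LIMSEQ_decseq_INF by blast
  qed
  then show ?thesis unfolding pointwise_limit_def by metis
qed

section \<open>Gain operators\<close>

locale gain =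
  fixes Iset :: "'i::finite \<Rightarrow> 'i set" and \<gamma> :: "'i \<Rightarrow> 'i \<Rightarrow> real \<Rightarrow> real"
    and \<mu> :: "'i \<Rightarrow> ('i \<Rightarrow> real) \<Rightarrow> real"
  assumes gain_operator: "gain_operator Iset \<gamma> \<mu>"
begin

lemma gain_operator_parts:
  "\<forall>i. \<forall>j\<in>Iset i. class_Kinf (\<gamma> i j)"
  "\<forall>i s. nonneg s \<longrightarrow> 0 \<le> \<mu> i s"
  "\<exists>\<xi>. class_Kinf \<xi> \<and> (\<forall>i. \<mu> i (\<lambda>_. 0) = 0 \<and>
          (\<forall>s. nonneg s \<longrightarrow> \<xi> (supn s) \<le> \<mu> i s))"
  "\<forall>i s t. nonneg s \<longrightarrow> nonneg t \<longrightarrow> (\<forall>k. s k \<le> t k) \<longrightarrow> \<mu> i s \<le> \<mu> i t"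
  "\<forall>i J s0. finite J \<longrightarrow> nonneg s0 \<longrightarrow> (\<forall>k. k \<notin> J \<longrightarrow> s0 k = 0) \<longrightarrow>
          (\<forall>\<epsilon>>0. \<exists>\<delta>>0. \<forall>s. nonneg s \<longrightarrow> (\<forall>k. k \<notin> J \<longrightarrow> s k = 0) \<longrightarrow>
             supn (\<lambda>k. s k - s0 k) \<le> \<delta> \<longrightarrow> \<bar>\<mu> i s - \<mu> i s0\<bar> \<le> \<epsilon>)"
  by (insert gain_operator, unfold gain_operator_def, elim conjE, assumption)+

abbreviation G where "G \<equiv> Gam Iset \<gamma> \<mu>"

abbreviation G_rho where "G_rho \<rho> \<equiv> Gam_rho \<rho> Iset \<gamma> \<mu>"

lemma gamma_class_K: "j \<in> Iset i \<Longrightarrow> class_K (\<gamma> i j)"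
  using gain_operator_parts(1) class_Kinf_imp_class_K by blast

lemma mu_nonneg: "nonneg s \<Longrightarrow> 0 \<le> \<mu> i s"
  using gain_operator_parts(2) by blast

lemma mu_zero: "\<mu> i (\<lambda>_. 0) = 0"
  using gain_operator_parts(3) by blast

lemma mu_mono: "nonneg s \<Longrightarrow> \<forall>k. s k \<le> t k \<Longrightarrow> \<mu> i s \<le> \<mu> i t"
  using gain_operator_parts(4) unfolding nonneg_def by (meson order_trans)

text \<open>Since the index set is finite, (M3) with \<open>J = UNIV\<close> is continuity of \<open>\<mu> i\<close> on the cone.\<close>

lemma mu_continuous:
  "nonneg s0 \<Longrightarrow> 0 < \<epsilon> \<Longrightarrow>
    \<exists>\<delta>>0. \<forall>s. nonneg s \<longrightarrow> supn (\<lambda>k. s k - s0 k) \<le> \<delta> \<longrightarrow> \<bar>\<mu> i s - \<mu> i s0\<bar> \<le> \<epsilon>"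
  using gain_operator_parts(5)[rule_format, where J = UNIV] by simp

definition gain_input :: "'i \<Rightarrow> ('i \<Rightarrow> real) \<Rightarrow> 'i \<Rightarrow> real" where
  "gain_input i s = (\<lambda>j. if j \<in> Iset i then \<gamma> i j (s j) else 0)"

lemma G_eq: "G s i = \<mu> i (gain_input i s)"
  by (simp add: Gam_def gain_input_def)

lemma G_rho_eq: "G_rho \<rho> s i = G s i + \<rho> (G s i)"
  by (simp add: Gam_rho_def)

lemma gain_input_nonneg: "nonneg s \<Longrightarrow> nonneg (gain_input i s)"
  unfolding nonneg_def gain_input_def using gamma_class_K class_K_nonneg by auto

lemma gain_input_mono: "nonneg s \<Longrightarrow> \<forall>j. s j \<le> t j \<Longrightarrow> gain_input i s j \<le> gain_input i t j"
  unfolding nonneg_def gain_input_def using gamma_class_K class_K_mono by auto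

lemma G_nonneg: "nonneg s \<Longrightarrow> 0 \<le> G s i"
  by (simp add: G_eq gain_input_nonneg mu_nonneg)

lemma G_mono: "nonneg s \<Longrightarrow> \<forall>j. s j \<le> t j \<Longrightarrow> G s i \<le> G t i"
  unfolding G_eq by (intro mu_mono gain_input_nonneg) (auto intro: gain_input_mono)

lemma G_zero: "G (\<lambda>_. 0) i = 0"
proof -
  have "gain_input i (\<lambda>_. 0) = (\<lambda>_. 0)"
    unfolding gain_input_def using gamma_class_K class_K_0 by auto
  then show ?thesis by (simp add: G_eq mu_zero)
qed

lemma G_local: "\<forall>j\<in>Iset i. s j = t j \<Longrightarrow> G s i = G t i"
  by (simp add: G_eq gain_input_def cong: if_cong)

lemma G_rho_nonneg: "class_K \<rho> \<Longrightarrow> nonneg s \<Longrightarrow> 0 \<le> G_rho \<rho> s i"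
  using G_nonneg class_K_nonneg by (simp add: G_rho_eq add_nonneg_nonneg)

lemma G_rho_nonneg_vec: "class_K \<rho> \<Longrightarrow> nonneg s \<Longrightarrow> nonneg (G_rho \<rho> s)"
  using G_rho_nonneg nonneg_def by blast

lemma G_rho_mono:
  assumes \<rho>: "class_K \<rho>" and s: "nonneg s" and st: "\<forall>j. s j \<le> t j"
  shows "G_rho \<rho> s i \<le> G_rho \<rho> t i"
proof -
  have "G s i \<le> G t i" using G_mono[OF s st] .
  moreover have "\<rho> (G s i) \<le> \<rho> (G t i)" using class_K_mono[OF \<rho> G_nonneg[OF s] \<open>G s i \<le> G t i\<close>] .
  ultimately show ?thesis by (simp add: G_rho_eq)
qed

lemma G_rho_zero: "class_K \<rho> \<Longrightarrow> G_rho \<rho> (\<lambda>_. 0) i = 0"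
  by (simp add: G_rho_eq G_zero class_K_0)

lemma G_rho_local: "\<forall>j\<in>Iset i. s j = t j \<Longrightarrow> G_rho \<rho> s i = G_rho \<rho> t i"
  using G_local[of i s t] by (simp only: G_rho_eq)

lemma G_rho_le_G_rho: "(\<And>x. 0 \<le> x \<Longrightarrow> \<rho>1 x \<le> \<rho>2 x) \<Longrightarrow> nonneg s \<Longrightarrow> G_rho \<rho>1 s i \<le> G_rho \<rho>2 s i"
  using G_nonneg[of s i] by (simp add: G_rho_eq)

lemma G_rho_iterate_nonneg: "class_K \<rho> \<Longrightarrow> nonneg s \<Longrightarrow> nonneg ((G_rho \<rho> ^^ n) s)"
  by (induction n) (auto intro: G_rho_nonneg_vec)

lemma mu_tendsto:
  assumes "pointwise_limit v w" "\<forall>m. nonneg (v m)" "nonneg w"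
  shows "(\<lambda>m. \<mu> i (v m)) \<longlonglongrightarrow> \<mu> i w"
proof (rule tendstoI)
  fix e :: real assume e: "0 < e"
  then obtain d where d: "d > 0" and close: "\<forall>s. nonneg s \<longrightarrow>
       supn (\<lambda>k. s k - w k) \<le> d \<longrightarrow> \<bar>\<mu> i s - \<mu> i w\<bar> \<le> e / 2"
    using mu_continuous[OF assms(3), of "e / 2"] by auto
  have "eventually (\<lambda>m. supn (\<lambda>k. v m k - w k) < d) sequentially"
    using order_tendstoD(2)[OF pointwise_limit_supn_diff[OF assms(1)] d] .
  then show "eventually (\<lambda>m. dist (\<mu> i (v m)) (\<mu> i w) < e) sequentially"
  proof (rule eventually_mono)
    fix m assume "supn (\<lambda>k. v m k - w k) < d"
    then have "\<bar>\<mu> i (v m) - \<mu> i w\<bar> \<le> e / 2" using close assms(2) by simp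
    then show "dist (\<mu> i (v m)) (\<mu> i w) < e" using e by (simp add: dist_real_def)
  qed
qed

lemma G_tendsto:
  assumes "pointwise_limit x l" "\<forall>m. nonneg (x m)" "nonneg l"
  shows "pointwise_limit (\<lambda>m. G (x m)) (G l)"
  unfolding pointwise_limit_def G_eq
proof
  fix i
  have "pointwise_limit (\<lambda>m. gain_input i (x m)) (gain_input i l)"
    using class_K_tendsto[OF gamma_class_K] assms
    unfolding pointwise_limit_def nonneg_def gain_input_def by auto
  then show "(\<lambda>m. \<mu> i (gain_input i (x m))) \<longlonglongrightarrow> \<mu> i (gain_input i l)"
    by (rule mu_tendsto) (use assms gain_input_nonneg in auto)
qed

lemma G_rho_tendsto:
  assumes "class_K \<rho>" "pointwise_limit x l" "\<forall>m. nonneg (x m)" "nonneg l"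
  shows "pointwise_limit (\<lambda>m. G_rho \<rho> (x m)) (G_rho \<rho> l)"
  unfolding pointwise_limit_def G_rho_eq
proof
  fix i
  have G: "(\<lambda>m. G (x m) i) \<longlonglongrightarrow> G l i"
    using G_tendsto[OF assms(2-4)] unfolding pointwise_limit_def by blast
  moreover have "(\<lambda>m. \<rho> (G (x m) i)) \<longlonglongrightarrow> \<rho> (G l i)"
    by (rule class_K_tendsto[OF assms(1) G]) (use G_nonneg assms in auto)
  ultimately show "(\<lambda>m. G (x m) i + \<rho> (G (x m) i)) \<longlonglongrightarrow> G l i + \<rho> (G l i)"
    by (rule tendsto_add)
qed

end

section \<open>Conditions implying the NJI condition\<close>

lemma uniform_NJI_imp_NJI:
  assumes "uniform_NJI Iset T"
  shows "NJI T"
  unfolding NJI_def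
proof (intro allI impI notI)
  fix s assume "pos_vec s" and le: "\<forall>i. s i \<le> T s i"
  then have s: "nonneg s" "0 < supn s" using supn_pos by (auto simp: pos_vec_def)
  obtain i where i: "s i = supn s" using supn_attained_nonneg[OF s(1)] by blast
  obtain n \<delta> where "\<forall>s' i. nonneg s' \<longrightarrow> supn s \<le> s' i \<longrightarrow> supn s' \<le> supn s \<longrightarrow>
      (\<exists>j\<in>in_nbhd Iset i n. \<delta> \<le> s' j \<and> T s' j < s' j)"
    using assms s(2) unfolding uniform_NJI_def by blast
  then have "\<exists>j. T s j < s j" using s(1) i by (metis order_refl)
  then obtain j where "T s j < s j" ..
  then show False using le by (meson not_le)
qed

lemma oplus_MBI_imp_NJI:
  assumes "oplus_MBI T"
  shows "NJI T"
  unfolding NJI_def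
proof (intro allI impI notI)
  fix s assume "pos_vec s" and le: "\<forall>i. s i \<le> T s i"
  then have s: "nonneg s" "0 < supn s" using supn_pos by (auto simp: pos_vec_def)
  obtain \<phi> where \<phi>: "class_Kinf \<phi>" and gain: "\<forall>s b. nonneg s \<longrightarrow> nonneg b \<longrightarrow>
      (\<forall>i. s i \<le> vmax b (T s) i) \<longrightarrow> supn s \<le> \<phi> (supn b)"
    using assms unfolding oplus_MBI_def by blast
  have "\<forall>i. s i \<le> vmax (\<lambda>_. 0) (T s) i"
    using le by (simp add: vmax_def le_max_iff_disj)
  then have "supn s \<le> \<phi> 0"
    using gain[rule_format, of s "\<lambda>_. 0"] s(1) by simp
  then show False
    using s(2) class_K_0[OF class_Kinf_imp_class_K[OF \<phi>]] by simp
qed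

lemma UGAS_imp_NJI:
  assumes mono: "\<And>s t i. nonneg s \<Longrightarrow> \<forall>j. s j \<le> t j \<Longrightarrow> T s i \<le> T t i"
    and "UGAS T"
  shows "NJI T"
  unfolding NJI_def
proof (intro allI impI notI)
  fix s assume "pos_vec s" and le: "\<forall>i. s i \<le> T s i"
  then have s: "nonneg s" "0 < supn s" using supn_pos by (auto simp: pos_vec_def)
  obtain \<beta> where \<beta>: "class_KL \<beta>" and decay: "\<forall>s n. nonneg s \<longrightarrow> supn ((T ^^ n) s) \<le> \<beta> (supn s) (real n)"
    using assms(2) unfolding UGAS_def by blast
  have below_iterates: "\<forall>i. s i \<le> (T ^^ n) s i" for n
  proof (induction n)
    case (Suc n)
    then show ?case using le mono[OF s(1)] by (auto intro: order_trans)
  qed simp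
  have "supn s \<le> \<beta> (supn s) (real n)" for n
    using supn_mono[OF s(1) below_iterates] decay s(1) by (meson order_trans)
  moreover have "(\<lambda>n. \<beta> (supn s) (real n)) \<longlonglongrightarrow> 0"
    using \<beta> s(2) filterlim_compose[OF _ filterlim_real_sequentially]
    unfolding class_KL_def by blast
  ultimately have "supn s \<le> 0"
    by (intro LIMSEQ_le_const) auto
  then show False using s(2) by simp
qed

lemma (in gain) UGAS_G_rho_imp_NJI:
  assumes "class_Kinf \<rho>" "UGAS (G_rho \<rho>)"
  shows "NJI (G_rho \<rho>)"
  using UGAS_imp_NJI[OF G_rho_mono[OF class_Kinf_imp_class_K[OF assms(1)]] assms(2)] .

lemma touching_point_on_path:
  fixes \<sigma> :: "real \<Rightarrow> 'i::finite \<Rightarrow> real"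
  assumes \<sigma>: "\<And>i. class_Kinf (\<lambda>r. \<sigma> r i)" and s: "nonneg s" "s \<noteq> (\<lambda>_. 0)"
  obtains r i where "0 < r" "\<forall>j. s j \<le> \<sigma> r j" "s i = \<sigma> r i"
proof -
  define t where "t i = Kinv (\<lambda>r. \<sigma> r i) (s i)" for i
  have t: "0 \<le> t i" "\<sigma> (t i) i = s i" for i
    using Kinv_nonneg[OF \<sigma>] f_Kinv[OF \<sigma>] s(1) unfolding t_def nonneg_def by auto
  have "Max (range t) \<in> range t" by (rule Max_in) auto
  then obtain i where i: "t i = Max (range t)" by (metis rangeE)
  have "t j \<le> t i" for j
    unfolding i by (rule Max_ge) auto
  then have "\<forall>j. s j \<le> \<sigma> (t i) j"
    using class_K_mono[OF class_Kinf_imp_class_K[OF \<sigma>]] t by metis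
  moreover have "0 < t i"
  proof -
    obtain j where "s j \<noteq> 0" using s(2) by auto
    then have "t j \<noteq> 0" using t(2)[of j] class_K_0[OF class_Kinf_imp_class_K[OF \<sigma>]] by auto
    then show ?thesis using t(1)[of j] \<open>t j \<le> t i\<close> by linarith
  qed
  ultimately show ?thesis using that[of "t i" i] t(2)[of i] by simp
qed

lemma (in gain) path_strict_decay_imp_NJI:
  assumes "path_strict_decay Iset \<gamma> \<mu> \<sigma>"
  shows "\<exists>\<rho>. class_Kinf \<rho> \<and> NJI (G_rho \<rho>)"
proof -
  obtain \<rho> where \<rho>: "class_Kinf \<rho>" and decay: "\<forall>r\<ge>0. \<forall>i. G_rho \<rho> (\<sigma> r) i \<le> \<sigma> r i"
    and \<sigma>: "\<forall>i. class_Kinf (\<lambda>r. \<sigma> r i)"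
    by (insert assms, unfold path_strict_decay_def, elim conjE exE) blast
  have \<rho>K: "class_K \<rho>" using \<rho> by (rule class_Kinf_imp_class_K)
  have "NJI (G_rho (\<lambda>x. \<rho> x / 2))"
    unfolding NJI_def
  proof (intro allI impI notI)
    fix s assume "pos_vec s" and le: "\<forall>i. s i \<le> G_rho (\<lambda>x. \<rho> x / 2) s i"
    then have s: "nonneg s" "s \<noteq> (\<lambda>_. 0)" by (auto simp: pos_vec_def)
    obtain r i where r: "0 < r" and below: "\<forall>j. s j \<le> \<sigma> r j" and touch: "s i = \<sigma> r i"
      using touching_point_on_path[OF \<sigma>[rule_format] s] .
    have \<sigma>K: "class_K (\<lambda>r. \<sigma> r j)" for j
      using \<sigma> class_Kinf_imp_class_K by blast
    have \<sigma>r: "nonneg (\<sigma> r)"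
      using class_K_nonneg[OF \<sigma>K] r by (simp add: nonneg_def)
    define g where "g = G (\<sigma> r) i"
    have "g + \<rho> g \<le> s i"
      using decay r touch by (simp add: G_rho_eq g_def)
    moreover have "s i \<le> g + \<rho> g / 2"
      using le[rule_format, of i] G_rho_mono[OF class_Kinf_imp_class_K[OF class_Kinf_divide[OF \<rho>]] s(1) below, of 2 i]
      by (simp add: G_rho_eq g_def)
    moreover have "0 \<le> g"
      using G_nonneg[OF \<sigma>r] by (simp add: g_def)
    ultimately have "g = 0"
      using class_K_pos[OF \<rho>K, of g] by fastforce
    moreover have "0 < s i"
      using touch class_K_pos[OF \<sigma>K r] by simp
    ultimately show False
      using \<open>s i \<le> g + \<rho> g / 2\<close> class_K_0[OF \<rho>K] by simp
  qed
  then show ?thesis using class_Kinf_divide[OF \<rho>, of 2] by auto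
qed

section \<open>Boundedness of the sets \<open>MBI_set T1\<close>\<close>

lemma intermediate_vector:
  fixes v w :: "'i::finite \<Rightarrow> real"
  assumes v: "nonneg v" and w: "nonneg w" and vw: "supn (\<lambda>k. v k - w k) \<le> real (Suc N) * \<delta>"
  obtains z where "nonneg z" "supn (\<lambda>k. v k - z k) \<le> real N * \<delta>" "supn (\<lambda>k. z k - w k) \<le> \<delta>"
proof -
  define t where "t = real N / real (Suc N)"
  have t: "0 \<le> t" "t \<le> 1" by (auto simp: t_def)
  define z where "z k = (1 - t) * v k + t * w k" for k
  have "nonneg z"
    using v w t unfolding nonneg_def z_def by simp
  have vw_k: "\<bar>v k - w k\<bar> \<le> real (Suc N) * \<delta>" for k
    using vw unfolding supn_le_iff by blast
  have "v k - z k = t * (v k - w k)" "z k - w k = (1 - t) * (v k - w k)" for k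
    by (simp_all add: z_def algebra_simps)
  then have dist_eq: "\<bar>v k - z k\<bar> = t * \<bar>v k - w k\<bar>" "\<bar>z k - w k\<bar> = (1 - t) * \<bar>v k - w k\<bar>" for k
    using t by (simp_all add: abs_mult)
  have scale: "t * (real (Suc N) * \<delta>) = real N * \<delta>" "(1 - t) * (real (Suc N) * \<delta>) = \<delta>"
    by (simp_all add: t_def field_simps)
  have "\<bar>v k - z k\<bar> \<le> real N * \<delta>" "\<bar>z k - w k\<bar> \<le> \<delta>" for k
    unfolding dist_eq
    by (subst scale[symmetric]; rule mult_left_mono[OF vw_k]; use t in simp)+
  then have "supn (\<lambda>k. v k - z k) \<le> real N * \<delta>" "supn (\<lambda>k. z k - w k) \<le> \<delta>"
    by (simp_all add: supn_le_iff)
  with \<open>nonneg z\<close> show ?thesis by (rule that)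
qed

lemma uniformly_continuous_bounded_perturbation:
  fixes f :: "('i::finite \<Rightarrow> real) \<Rightarrow> real"
  assumes uc: "\<And>\<epsilon>. 0 < \<epsilon> \<Longrightarrow> \<exists>\<delta>>0. \<forall>s t. nonneg s \<longrightarrow> nonneg t \<longrightarrow>
      supn (\<lambda>k. s k - t k) \<le> \<delta> \<longrightarrow> \<bar>f s - f t\<bar> \<le> \<epsilon>"
  shows "\<exists>C\<ge>0. \<forall>v w. nonneg v \<longrightarrow> nonneg w \<longrightarrow> supn (\<lambda>k. v k - w k) \<le> X \<longrightarrow> \<bar>f v - f w\<bar> \<le> C"
proof -
  obtain \<delta> where \<delta>: "\<delta> > 0" and step: "\<forall>s t. nonneg s \<longrightarrow> nonneg t \<longrightarrow>
      supn (\<lambda>k. s k - t k) \<le> \<delta> \<longrightarrow> \<bar>f s - f t\<bar> \<le> 1"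
    using uc[of 1] by auto
  have chain: "\<forall>v w. nonneg v \<longrightarrow> nonneg w \<longrightarrow> supn (\<lambda>k. v k - w k) \<le> real N * \<delta> \<longrightarrow>
      \<bar>f v - f w\<bar> \<le> real N" for N
  proof (induction N)
    case 0
    then show ?case by (auto simp: supn_le_iff fun_eq_iff)
  next
    case (Suc N)
    show ?case
    proof (intro allI impI)
      fix v w :: "'i \<Rightarrow> real"
      assume v: "nonneg v" and w: "nonneg w" and vw: "supn (\<lambda>k. v k - w k) \<le> real (Suc N) * \<delta>"
      obtain z where "nonneg z" "supn (\<lambda>k. v k - z k) \<le> real N * \<delta>" "supn (\<lambda>k. z k - w k) \<le> \<delta>"
        using intermediate_vector[OF v w vw] .
      then have "\<bar>f v - f z\<bar> \<le> real N" "\<bar>f z - f w\<bar> \<le> 1"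
        using Suc.IH step v w by blast+
      then show "\<bar>f v - f w\<bar> \<le> real (Suc N)" by simp
    qed
  qed
  have "X / \<delta> \<le> real (nat \<lceil>X / \<delta>\<rceil>)"
    by linarith
  then have "X \<le> real (nat \<lceil>X / \<delta>\<rceil>) * \<delta>"
    using \<delta> by (simp add: divide_le_eq)
  then show ?thesis
    using chain[of "nat \<lceil>X / \<delta>\<rceil>"] of_nat_0_le_iff by (blast intro: order_trans)
qed

locale gain_uc = gain Iset \<gamma> \<mu> for Iset :: "'i::finite \<Rightarrow> 'i set" and \<gamma> \<mu> +
  assumes unif_cont: "unif_cont_mu \<mu>"
begin

lemma mu_bounded_perturbation:
  "\<exists>C\<ge>0. \<forall>i v w. nonneg v \<longrightarrow> nonneg w \<longrightarrow> supn (\<lambda>k. v k - w k) \<le> X \<longrightarrow> \<bar>\<mu> i v - \<mu> i w\<bar> \<le> C"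
proof -
  have "\<forall>i. \<exists>C\<ge>0. \<forall>v w. nonneg v \<longrightarrow> nonneg w \<longrightarrow> supn (\<lambda>k. v k - w k) \<le> X \<longrightarrow>
      \<bar>\<mu> i v - \<mu> i w\<bar> \<le> C"
  proof
    fix i
    show "\<exists>C\<ge>0. \<forall>v w. nonneg v \<longrightarrow> nonneg w \<longrightarrow> supn (\<lambda>k. v k - w k) \<le> X \<longrightarrow>
      \<bar>\<mu> i v - \<mu> i w\<bar> \<le> C"
      by (rule uniformly_continuous_bounded_perturbation)
        (use unif_cont in \<open>simp add: unif_cont_mu_def\<close>)
  qed
  then obtain C where C_nonneg: "\<forall>i. 0 \<le> C i" and C: "\<forall>i v w. nonneg v \<longrightarrow> nonneg w \<longrightarrow>
      supn (\<lambda>k. v k - w k) \<le> X \<longrightarrow> \<bar>\<mu> i v - \<mu> i w\<bar> \<le> C i"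
    by metis
  have "C i \<le> Max (range C)" for i
    by (rule Max_ge) auto
  with C C_nonneg show ?thesis by (blast intro: order_trans)
qed

definition gamma_sum :: "real \<Rightarrow> real" where
  "gamma_sum a = (\<Sum>i\<in>UNIV. \<Sum>j\<in>Iset i. \<gamma> i j a)"

lemma gamma_le_gamma_sum:
  assumes "j \<in> Iset i" "0 \<le> a"
  shows "\<gamma> i j a \<le> gamma_sum a"
proof -
  have nonneg: "0 \<le> \<gamma> i' j' a" if "j' \<in> Iset i'" for i' j'
    using class_K_nonneg[OF gamma_class_K[OF that] \<open>0 \<le> a\<close>] .
  have "\<gamma> i j a \<le> (\<Sum>j\<in>Iset i. \<gamma> i j a)"
    using assms nonneg finite by (intro member_le_sum) auto
  also have "\<dots> \<le> gamma_sum a"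
    unfolding gamma_sum_def using nonneg by (intro member_le_sum) (auto intro: sum_nonneg)
  finally show ?thesis .
qed

lemma gain_input_restr_close:
  assumes "nonneg s" "\<forall>j. j \<notin> J \<longrightarrow> s j \<le> a" "0 \<le> a"
  shows "supn (\<lambda>j. gain_input i s j - gain_input i (restr J s) j) \<le> gamma_sum a"
  unfolding supn_le_iff
proof
  fix j
  have "0 \<le> gamma_sum a"
    using gamma_le_gamma_sum[of _ i] assms(3) class_K_nonneg[OF gamma_class_K]
    unfolding gamma_sum_def by (auto intro!: sum_nonneg)
  moreover have "\<gamma> i j (s j) \<le> gamma_sum a" if "j \<in> Iset i" "j \<notin> J"
    using that assms class_K_mono[OF gamma_class_K[OF that(1)], of "s j" a]
      gamma_le_gamma_sum[OF that(1) assms(3)] unfolding nonneg_def by auto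
  moreover have "0 \<le> \<gamma> i j (s j)" if "j \<in> Iset i"
    using that assms(1) class_K_nonneg[OF gamma_class_K] unfolding nonneg_def by blast
  ultimately show "\<bar>gain_input i s j - gain_input i (restr J s) j\<bar> \<le> gamma_sum a"
    using class_K_0[OF gamma_class_K] by (auto simp: gain_input_def restr_def)
qed

end

definition MBI_set :: "(('i \<Rightarrow> real) \<Rightarrow> 'i \<Rightarrow> real) \<Rightarrow> real \<Rightarrow> ('i \<Rightarrow> real) set" where
  "MBI_set T r = {s. nonneg s \<and> (\<forall>i. s i \<le> max r (T s i))}"

lemma MBI_set_mono: "r \<le> r' \<Longrightarrow> MBI_set T r \<subseteq> MBI_set T r'"
  unfolding MBI_set_def by (auto intro: order_trans)

lemma class_Kinf_margin:
  assumes \<rho>: "class_Kinf \<rho>" and C: "0 \<le> C"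
  shows "\<exists>L\<ge>0. \<forall>g\<ge>0. \<forall>x. L < x \<longrightarrow> x \<le> g + \<rho> (g / 2) / 2 \<longrightarrow> C \<le> g \<and> x \<le> (g - C) + \<rho> (g - C)"
proof -
  have \<rho>K: "class_K \<rho>" using \<rho> by (rule class_Kinf_imp_class_K)
  obtain r0 where r0: "r0 \<ge> 0" "2 * C < \<rho> r0" using class_Kinf_unbounded[OF \<rho>] by blast
  define g0 where "g0 = max (2 * C) (2 * r0)"
  define L where "L = g0 + \<rho> (g0 / 2) / 2"
  have g0: "g0 \<ge> 0" using C by (simp add: g0_def)
  have "\<forall>g\<ge>0. \<forall>x. L < x \<longrightarrow> x \<le> g + \<rho> (g / 2) / 2 \<longrightarrow> C \<le> g \<and> x \<le> (g - C) + \<rho> (g - C)"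
  proof (intro allI impI)
    fix g x :: real assume g: "g \<ge> 0" and x: "L < x" "x \<le> g + \<rho> (g / 2) / 2"
    have "g0 < g"
    proof (rule ccontr)
      assume "\<not> g0 < g"
      then have "\<rho> (g / 2) \<le> \<rho> (g0 / 2)" using class_K_mono[OF \<rho>K, of "g / 2" "g0 / 2"] g by simp
      with x \<open>\<not> g0 < g\<close> show False unfolding L_def by linarith
    qed
    then have "r0 \<le> g / 2" "2 * C \<le> g" unfolding g0_def by auto
    then have "\<rho> r0 \<le> \<rho> (g / 2)" "\<rho> (g / 2) \<le> \<rho> (g - C)"
      using class_K_mono[OF \<rho>K] r0(1) g by auto
    then show "C \<le> g \<and> x \<le> (g - C) + \<rho> (g - C)"
      using x(2) r0(2) \<open>2 * C \<le> g\<close> C by linarith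
  qed
  moreover have "L \<ge> 0"
    unfolding L_def using g0 class_K_nonneg[OF \<rho>K, of "g0 / 2"] by simp
  ultimately show ?thesis by blast
qed

lemma value_gap:
  fixes s :: "'i::finite \<Rightarrow> real" and a :: "nat \<Rightarrow> real"
  assumes a: "\<And>k. a k \<le> a (Suc k)"
  obtains k where "k \<le> CARD('i)" "\<forall>j. s j \<le> a k \<or> a (Suc k) < s j"
proof (rule ccontr)
  assume "\<not> thesis"
  with that have "\<forall>k. \<exists>j. k \<le> CARD('i) \<longrightarrow> a k < s j \<and> s j \<le> a (Suc k)"
    by (meson not_le)
  then obtain f where f: "\<And>k. k \<le> CARD('i) \<Longrightarrow> a k < s (f k) \<and> s (f k) \<le> a (Suc k)"
    by metis
  have distinct: "f k \<noteq> f k'" if "k < k'" "k' \<le> CARD('i)" for k k'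
  proof -
    have "a (Suc k) \<le> a k'"
      using lift_Suc_mono_le[of a, OF a] that(1) by simp
    then show ?thesis
      using f[of k] f[of k'] that by auto
  qed
  have "inj_on f {..CARD('i)}"
    by (rule inj_onI) (metis atMost_iff distinct linorder_neqE_nat)
  then have "card {..CARD('i)} \<le> card (UNIV :: 'i set)"
    by (rule card_inj_on_le) auto
  then show False by simp
qed

locale NJI_gain = gain_uc Iset \<gamma> \<mu> for Iset :: "'i::finite \<Rightarrow> 'i set" and \<gamma> \<mu> +
  fixes \<rho> :: "real \<Rightarrow> real"
  assumes rho: "class_Kinf \<rho>" and NJI: "NJI (G_rho \<rho>)"
begin

lemma rho_class_K: "class_K \<rho>"
  using rho by (rule class_Kinf_imp_class_K)

definition rho1 :: "real \<Rightarrow> real" where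
  "rho1 x = \<rho> (x / 2) / 2"

lemma rho1_class_Kinf: "class_Kinf rho1"
  using class_Kinf_divide[OF class_Kinf_scale[OF rho, of "1 / 2"], of 2]
  unfolding rho1_def by simp

lemma rho1_class_K: "class_K rho1"
  using rho1_class_Kinf by (rule class_Kinf_imp_class_K)

abbreviation T1 where "T1 \<equiv> G_rho rho1"

lemma rho1_le: "0 \<le> x \<Longrightarrow> rho1 x \<le> \<rho> x"
  using class_K_mono[OF rho_class_K, of "x / 2" x] class_K_nonneg[OF rho_class_K, of "x / 2"]
  by (simp add: rho1_def)

lemma T1_le: "nonneg s \<Longrightarrow> T1 s i \<le> G_rho \<rho> s i"
  by (rule G_rho_le_G_rho[OF rho1_le])

lemma T1_no_joint_increase: "nonneg s \<Longrightarrow> \<forall>i. s i \<le> T1 s i \<Longrightarrow> s = (\<lambda>_. 0)"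
  using NJI T1_le unfolding NJI_def pos_vec_def by (meson order_trans)

text \<open>Entries of \<open>s \<in> MBI_set T1 r\<close> above \<open>b\<close> still satisfy \<open>s i \<le> \<Gamma>\<^sub>\<rho>(s') i\<close> for the truncation \<open>s'\<close>
  of \<open>s\<close> to these entries, when the entries avoid \<open>(a, b]\<close> and \<open>b\<close> exceeds a margin absorbing the
  perturbation caused by the removed entries; the NJI condition then forbids such entries.\<close>

lemma top_entries_le_G_rho:
  assumes s: "s \<in> MBI_set T1 r"
    and perturb: "\<forall>i v w. nonneg v \<longrightarrow> nonneg w \<longrightarrow> supn (\<lambda>k. v k - w k) \<le> gamma_sum a \<longrightarrow>
       \<bar>\<mu> i v - \<mu> i w\<bar> \<le> C"
    and margin: "\<forall>g\<ge>0. \<forall>x. L < x \<longrightarrow> x \<le> g + rho1 g \<longrightarrow> C \<le> g \<and> x \<le> (g - C) + \<rho> (g - C)"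
    and ab: "0 \<le> a" "r \<le> b" "L \<le> b"
    and gap: "\<forall>j. s j \<le> a \<or> b < s j" and i: "b < s i"
  shows "s i \<le> G_rho \<rho> (restr {j. b < s j} s) i"
proof -
  define u where "u = restr {j. b < s j} s"
  have s_nonneg: "nonneg s" and s_le: "s i \<le> max r (T1 s i)"
    using s by (auto simp: MBI_set_def)
  then have "s i \<le> G s i + rho1 (G s i)"
    using i ab by (auto simp: G_rho_eq)
  moreover have "L < s i"
    using i ab by simp
  ultimately have shift: "C \<le> G s i \<and> s i \<le> (G s i - C) + \<rho> (G s i - C)"
    using margin G_nonneg[OF s_nonneg, of i] by blast
  have u_nonneg: "nonneg u"
    unfolding u_def using s_nonneg by (rule nonneg_restr)
  have "\<forall>j. j \<notin> {j. b < s j} \<longrightarrow> s j \<le> a"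
    using gap by auto
  then have "supn (\<lambda>k. gain_input i s k - gain_input i u k) \<le> gamma_sum a"
    unfolding u_def by (rule gain_input_restr_close[OF s_nonneg _ ab(1)])
  then have "\<bar>G s i - G u i\<bar> \<le> C"
    using perturb gain_input_nonneg[OF s_nonneg] gain_input_nonneg[OF u_nonneg] by (simp add: G_eq)
  then have "G s i - C \<le> G u i"
    by linarith
  moreover from this have "\<rho> (G s i - C) \<le> \<rho> (G u i)"
    using class_K_mono[OF rho_class_K] shift by simp
  ultimately show ?thesis
    using shift by (simp add: G_rho_eq u_def)
qed

lemma MBI_set_gap:
  assumes s: "s \<in> MBI_set T1 r"
    and perturb: "\<forall>i v w. nonneg v \<longrightarrow> nonneg w \<longrightarrow> supn (\<lambda>k. v k - w k) \<le> gamma_sum a \<longrightarrow>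
       \<bar>\<mu> i v - \<mu> i w\<bar> \<le> C"
    and margin: "\<forall>g\<ge>0. \<forall>x. L < x \<longrightarrow> x \<le> g + rho1 g \<longrightarrow> C \<le> g \<and> x \<le> (g - C) + \<rho> (g - C)"
    and ab: "0 \<le> a" "a \<le> b" "r \<le> b" "L \<le> b"
    and gap: "\<forall>j. s j \<le> a \<or> b < s j"
  shows "\<forall>j. s j \<le> a"
proof -
  define u where "u = restr {j. b < s j} s"
  have u_nonneg: "nonneg u"
    unfolding u_def using s by (intro nonneg_restr) (simp add: MBI_set_def)
  have "u i \<le> G_rho \<rho> u i" for i
  proof (cases "b < s i")
    case False
    then show ?thesis using G_rho_nonneg[OF rho_class_K u_nonneg] by (simp add: u_def restr_def)
  next
    case True
    then show ?thesis
      using top_entries_le_G_rho[OF s perturb margin ab(1,3,4) gap True] by (simp add: u_def restr_def)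
  qed
  then have "u = (\<lambda>_. 0)"
    using NJI u_nonneg unfolding NJI_def pos_vec_def by blast
  have "\<not> b < s j" for j
  proof
    assume "b < s j"
    then have "u j = s j" by (simp add: u_def restr_def)
    moreover have "0 < s j" using \<open>b < s j\<close> ab by linarith
    ultimately show False using \<open>u = (\<lambda>_. 0)\<close> by simp
  qed
  then show ?thesis using gap by blast
qed

lemma MBI_set_bounded:
  assumes "0 \<le> r"
  shows "\<exists>R. \<forall>s\<in>MBI_set T1 r. supn s \<le> R"
proof -
  obtain C where C_nonneg: "\<And>X. 0 \<le> C X" and C: "\<And>X. \<forall>i v w. nonneg v \<longrightarrow> nonneg w \<longrightarrow>
      supn (\<lambda>k. v k - w k) \<le> X \<longrightarrow> \<bar>\<mu> i v - \<mu> i w\<bar> \<le> C X"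
    using mu_bounded_perturbation by metis
  have "\<forall>C. \<exists>L. 0 \<le> C \<longrightarrow> 0 \<le> L \<and> (\<forall>g\<ge>0. \<forall>x. L < x \<longrightarrow> x \<le> g + rho1 g \<longrightarrow>
      C \<le> g \<and> x \<le> (g - C) + \<rho> (g - C))"
    using class_Kinf_margin[OF rho] unfolding rho1_def by blast
  then obtain L where L: "\<forall>C. 0 \<le> C \<longrightarrow> 0 \<le> L C \<and> (\<forall>g\<ge>0. \<forall>x. L C < x \<longrightarrow> x \<le> g + rho1 g \<longrightarrow>
      C \<le> g \<and> x \<le> (g - C) + \<rho> (g - C))"
    by metis
  have L_nonneg: "0 \<le> L (C X)" and L_margin: "\<forall>g\<ge>0. \<forall>x. L (C X) < x \<longrightarrow> x \<le> g + rho1 g \<longrightarrow>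
      C X \<le> g \<and> x \<le> (g - C X) + \<rho> (g - C X)" for X
    using L C_nonneg by blast+
  define a where "a = rec_nat r (\<lambda>_ ak. ak + L (C (gamma_sum ak)))"
  have a_Suc: "a (Suc k) = a k + L (C (gamma_sum (a k)))" for k
    by (simp add: a_def)
  have a_step: "a k \<le> a (Suc k)" for k
    using L_nonneg by (simp add: a_Suc)
  have a_ge: "r \<le> a k" for k
    by (induction k) (use a_step in \<open>auto simp: a_def intro: order_trans\<close>)
  have "s j \<le> a CARD('i)" if s: "s \<in> MBI_set T1 r" for s j
  proof -
    obtain k where k: "k \<le> CARD('i)" and gap: "\<forall>j. s j \<le> a k \<or> a (Suc k) < s j"
      by (rule value_gap[of a s, OF a_step])
    have "0 \<le> a k"
      using a_ge[of k] assms by linarith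
    moreover from this have "L (C (gamma_sum (a k))) \<le> a (Suc k)"
      by (simp add: a_Suc)
    ultimately have "\<forall>j. s j \<le> a k"
      using MBI_set_gap[OF s C L_margin _ a_step a_ge _ gap] by blast
    then have "s j \<le> a k" ..
    also have "\<dots> \<le> a CARD('i)"
      using lift_Suc_mono_le[of a, OF a_step k] .
    finally show ?thesis .
  qed
  moreover have "0 \<le> s j" if "s \<in> MBI_set T1 r" for s j
    using that by (simp add: MBI_set_def nonneg_def)
  ultimately show ?thesis
    by (intro exI[of _ "a CARD('i)"]) (simp add: supn_le_iff)
qed

lemma MBI_set_0: "MBI_set T1 0 = {\<lambda>_. 0}"
proof -
  have "s = (\<lambda>_. 0)" if "s \<in> MBI_set T1 0" for s
  proof -
    have s: "nonneg s" "\<forall>i. s i \<le> max 0 (T1 s i)"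
      using that by (auto simp: MBI_set_def)
    then have "\<forall>i. s i \<le> T1 s i"
      using G_rho_nonneg[OF rho1_class_K s(1)] by (simp add: max_absorb2)
    then show ?thesis
      using T1_no_joint_increase s(1) by blast
  qed
  moreover have "(\<lambda>_. 0) \<in> MBI_set T1 0"
    by (simp add: MBI_set_def)
  ultimately show ?thesis by blast
qed

lemma MBI_set_small:
  assumes e: "0 < e"
  shows "\<exists>x>0. \<forall>s\<in>MBI_set T1 x. supn s \<le> e"
proof (rule ccontr)
  assume "\<not> ?thesis"
  then have small: "\<forall>x>0. \<exists>s\<in>MBI_set T1 x. e < supn s"
    by (auto simp: not_le)
  have "\<exists>s. s \<in> MBI_set T1 (inverse (real (Suc m))) \<and> e < supn s" for m
    using small[rule_format, of "inverse (real (Suc m))"] by auto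
  then obtain x where x: "\<And>m. x m \<in> MBI_set T1 (inverse (real (Suc m)))" "\<And>m. e < supn (x m)"
    by metis
  then have x_nonneg: "\<forall>m. nonneg (x m)"
    by (simp add: MBI_set_def)
  have "x m \<in> MBI_set T1 1" for m
    using x(1) MBI_set_mono[of "inverse (real (Suc m))" 1 T1] by (auto simp: inverse_le_1_iff)
  then obtain R where "\<forall>m. supn (x m) \<le> R"
    using MBI_set_bounded[of 1] by auto
  then obtain q l where q: "strict_mono q" and l: "pointwise_limit (x \<circ> q) l"
    using bounded_imp_pointwise_convergent_subseq by blast
  have l_nonneg: "nonneg l"
    using pointwise_limit_nonneg[OF l] x_nonneg by simp
  have "e \<le> supn l"
    using pointwise_limit_supn[OF l] x(2) by (intro LIMSEQ_le_const) (auto intro: less_imp_le)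
  then have "l \<noteq> (\<lambda>_. 0)"
    using e by auto
  moreover have "l i \<le> T1 l i" for i
  proof -
    have "(\<lambda>m. inverse (real (Suc (q m)))) \<longlonglongrightarrow> 0"
      using LIMSEQ_subseq_LIMSEQ[OF LIMSEQ_inverse_real_of_nat q] by (simp add: o_def)
    then have "(\<lambda>m. max (inverse (real (Suc (q m)))) (T1 ((x \<circ> q) m) i)) \<longlonglongrightarrow> max 0 (T1 l i)"
      using G_rho_tendsto[OF rho1_class_K l] x_nonneg l_nonneg
      unfolding pointwise_limit_def by (intro tendsto_max) auto
    moreover have "(\<lambda>m. (x \<circ> q) m i) \<longlonglongrightarrow> l i"
      using l unfolding pointwise_limit_def by blast
    moreover have "\<forall>m. (x \<circ> q) m i \<le> max (inverse (real (Suc (q m)))) (T1 ((x \<circ> q) m) i)"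
      using x(1) by (simp add: MBI_set_def)
    ultimately have "l i \<le> max 0 (T1 l i)"
      by (intro LIMSEQ_le) auto
    then show ?thesis
      using G_rho_nonneg[OF rho1_class_K l_nonneg, of i] by linarith
  qed
  ultimately show False
    using T1_no_joint_increase l_nonneg by blast
qed

end

section \<open>A Lipschitz scale\<close>

definition lipschitz_minorant :: "(real \<Rightarrow> real) \<Rightarrow> real \<Rightarrow> real" where
  "lipschitz_minorant f r = Inf {f t + (r - t) | t. 0 \<le> t \<and> t \<le> r}"

context
  fixes f :: "real \<Rightarrow> real"
  assumes f_nonneg: "\<And>t. 0 \<le> t \<Longrightarrow> 0 \<le> f t"
    and f_mono: "\<And>s t. 0 \<le> s \<Longrightarrow> s \<le> t \<Longrightarrow> f s \<le> f t"
begin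

lemma lipschitz_minorant_le: "0 \<le> t \<Longrightarrow> t \<le> r \<Longrightarrow> lipschitz_minorant f r \<le> f t + (r - t)"
  unfolding lipschitz_minorant_def
  by (rule cInf_lower) (auto intro!: bdd_belowI[of _ 0] add_nonneg_nonneg f_nonneg)

lemma lipschitz_minorant_greatest:
  "0 \<le> r \<Longrightarrow> (\<And>t. 0 \<le> t \<Longrightarrow> t \<le> r \<Longrightarrow> c \<le> f t + (r - t)) \<Longrightarrow> c \<le> lipschitz_minorant f r"
  unfolding lipschitz_minorant_def by (rule cInf_greatest) auto

lemma lipschitz_minorant_nonneg: "0 \<le> r \<Longrightarrow> 0 \<le> lipschitz_minorant f r"
  by (rule lipschitz_minorant_greatest) (auto intro: add_nonneg_nonneg f_nonneg)

lemma lipschitz_minorant_mono: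
  assumes "0 \<le> r1" "r1 \<le> r2"
  shows "lipschitz_minorant f r1 \<le> lipschitz_minorant f r2"
proof (rule lipschitz_minorant_greatest)
  fix t assume t: "0 \<le> t" "t \<le> r2"
  show "lipschitz_minorant f r1 \<le> f t + (r2 - t)"
  proof (cases "t \<le> r1")
    case True
    then show ?thesis using lipschitz_minorant_le[OF t(1) True] assms by linarith
  next
    case False
    then show ?thesis using lipschitz_minorant_le[of r1 r1] f_mono[of r1 t] assms t by simp
  qed
qed (use assms in simp)

lemma lipschitz_minorant_le_add:
  assumes "0 \<le> r1" "r1 \<le> r2"
  shows "lipschitz_minorant f r2 \<le> lipschitz_minorant f r1 + (r2 - r1)"
proof -
  have "lipschitz_minorant f r2 - (r2 - r1) \<le> lipschitz_minorant f r1"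
  proof (rule lipschitz_minorant_greatest)
    fix t assume "0 \<le> t" "t \<le> r1"
    then show "lipschitz_minorant f r2 - (r2 - r1) \<le> f t + (r1 - t)"
      using lipschitz_minorant_le[of t r2] assms by simp
  qed (use assms in simp)
  then show ?thesis by simp
qed

lemma lipschitz_minorant_lipschitz:
  assumes "0 \<le> a" "0 \<le> b"
  shows "\<bar>lipschitz_minorant f a - lipschitz_minorant f b\<bar> \<le> \<bar>a - b\<bar>"
proof (cases "a \<le> b")
  case True
  then show ?thesis
    using lipschitz_minorant_mono[OF assms(1) True] lipschitz_minorant_le_add[OF assms(1) True]
    by linarith
next
  case False
  then have "b \<le> a" by simp
  then show ?thesis
    using lipschitz_minorant_mono[OF assms(2)] lipschitz_minorant_le_add[OF assms(2)] by fastforce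
qed

lemma lipschitz_minorant_ge_min:
  assumes "0 \<le> r"
  shows "min (r / 2) (f (r / 2)) \<le> lipschitz_minorant f r"
proof (rule lipschitz_minorant_greatest[OF assms])
  fix t assume t: "0 \<le> t" "t \<le> r"
  show "min (r / 2) (f (r / 2)) \<le> f t + (r - t)"
  proof (cases "t \<le> r / 2")
    case True
    then show ?thesis using f_nonneg[OF t(1)] by simp
  next
    case False
    then show ?thesis using f_mono[of "r / 2" t] assms t by simp
  qed
qed

end

context NJI_gain
begin

definition eta_set :: "real \<Rightarrow> real set" where
  "eta_set r = {x. 0 \<le> x \<and> x \<le> r \<and> (\<forall>s\<in>MBI_set T1 x. supn s \<le> r / 2)}"

definition eta :: "real \<Rightarrow> real" where
  "eta r = Sup (eta_set r)"

lemma zero_in_eta_set: "0 \<le> r \<Longrightarrow> 0 \<in> eta_set r"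
  by (simp add: eta_set_def MBI_set_0)

lemma bdd_above_eta_set: "bdd_above (eta_set r)"
  by (rule bdd_aboveI[of _ r]) (simp add: eta_set_def)

lemma eta_upper: "x \<in> eta_set r \<Longrightarrow> x \<le> eta r"
  unfolding eta_def by (rule cSup_upper[OF _ bdd_above_eta_set])

lemma eta_nonneg: "0 \<le> r \<Longrightarrow> 0 \<le> eta r"
  using eta_upper zero_in_eta_set by blast

lemma eta_mono:
  assumes "0 \<le> r" "r \<le> r'"
  shows "eta r \<le> eta r'"
  unfolding eta_def
proof (rule cSup_subset_mono)
  show "eta_set r \<noteq> {}" using zero_in_eta_set[OF assms(1)] by blast
  show "bdd_above (eta_set r')" by (rule bdd_above_eta_set)
  show "eta_set r \<subseteq> eta_set r'" using assms by (auto simp: eta_set_def intro: order_trans)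
qed

lemma eta_pos: "0 < r \<Longrightarrow> 0 < eta r"
proof -
  assume r: "0 < r"
  obtain x where x: "x > 0" "\<forall>s\<in>MBI_set T1 x. supn s \<le> r / 2"
    using MBI_set_small[of "r / 2"] r by auto
  have "min x r \<le> eta r"
    by (rule eta_upper) (use x r MBI_set_mono[of "min x r" x T1] in \<open>auto simp: eta_set_def\<close>)
  then show ?thesis using x r by linarith
qed

lemma eta_unbounded: "\<exists>r\<ge>0. M \<le> eta r"
proof -
  obtain R where R: "\<forall>s\<in>MBI_set T1 \<bar>M\<bar>. supn s \<le> R"
    using MBI_set_bounded[of "\<bar>M\<bar>"] by auto
  have "\<bar>M\<bar> \<le> eta (max \<bar>M\<bar> (2 * R))"
    by (rule eta_upper) (use R in \<open>auto simp: eta_set_def\<close>)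
  then show ?thesis by (intro exI[of _ "max \<bar>M\<bar> (2 * R)"]) auto
qed

lemma eta_bound:
  assumes "0 \<le> r" "0 \<le> y" "y < eta r" "s \<in> MBI_set T1 y"
  shows "supn s \<le> r / 2"
proof -
  obtain x where "x \<in> eta_set r" "y < x"
    using less_cSupD[OF _ assms(3)[unfolded eta_def]] zero_in_eta_set[OF assms(1)] by blast
  then have "0 \<le> x" "\<forall>s\<in>MBI_set T1 x. supn s \<le> r / 2" "y < x"
    by (auto simp: eta_set_def)
  then show ?thesis using assms(4) MBI_set_mono[of y x T1] by auto
qed

text \<open>The halving makes \<open>kappa r < eta r\<close> for \<open>r > 0\<close>, which is what \<open>eta_bound\<close> needs.\<close>

definition kappa :: "real \<Rightarrow> real" where
  "kappa r = lipschitz_minorant eta r / 2"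

lemma kappa_nonneg: "0 \<le> r \<Longrightarrow> 0 \<le> kappa r"
  using lipschitz_minorant_nonneg[of eta, OF eta_nonneg eta_mono] by (simp add: kappa_def)

lemma kappa_mono: "0 \<le> r1 \<Longrightarrow> r1 \<le> r2 \<Longrightarrow> kappa r1 \<le> kappa r2"
  using lipschitz_minorant_mono[of eta, OF eta_nonneg eta_mono] by (simp add: kappa_def)

lemma kappa_lipschitz: "0 \<le> a \<Longrightarrow> 0 \<le> b \<Longrightarrow> \<bar>kappa a - kappa b\<bar> \<le> \<bar>a - b\<bar>"
  using lipschitz_minorant_lipschitz[of eta, OF eta_nonneg eta_mono, of a b] by (simp add: kappa_def)

lemma kappa_pos: "0 < r \<Longrightarrow> 0 < kappa r"
  using lipschitz_minorant_ge_min[of eta, OF eta_nonneg eta_mono, of r] eta_pos[of "r / 2"]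
  by (simp add: kappa_def)

lemma kappa_unbounded: "\<exists>r\<ge>0. M \<le> kappa r"
proof -
  obtain r where r: "r \<ge> 0" "2 * M \<le> eta r" using eta_unbounded by blast
  define r' where "r' = max (2 * r) (4 * M)"
  have r': "0 \<le> r'" "2 * M \<le> r' / 2" "r \<le> r' / 2"
    using r(1) by (auto simp: r'_def)
  then have "2 * M \<le> eta (r' / 2)"
    using eta_mono[OF r(1)] r(2) by (meson order_trans)
  then have "2 * M \<le> lipschitz_minorant eta r'"
    using lipschitz_minorant_ge_min[of eta, OF eta_nonneg eta_mono, of r'] r' by linarith
  then show ?thesis
    using r' by (intro exI[of _ r']) (simp add: kappa_def)
qed

lemma kappa_bound: "0 < r \<Longrightarrow> s \<in> MBI_set T1 (kappa r) \<Longrightarrow> supn s \<le> r / 2"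
  using lipschitz_minorant_le[of eta, OF eta_nonneg eta_mono, of r r] eta_pos[of r]
    kappa_nonneg[of r] eta_bound[of r "kappa r" s]
  by (simp add: kappa_def)

section \<open>A decay chain\<close>

text \<open>Compared with \<open>T1\<close>, the term \<open>x i / 2\<close> keeps preimages of bounded sets bounded and the term
  \<open>kappa (supn x)\<close> keeps backward orbits positive; by \<open>kappa_bound\<close> neither admits a nonzero
  \<open>x \<le> G_kappa x\<close>.\<close>

definition G_kappa :: "('i \<Rightarrow> real) \<Rightarrow> 'i \<Rightarrow> real" where
  "G_kappa x = (\<lambda>i. max (max (T1 x i) (x i / 2)) (kappa (supn x)))"

lemma G_kappa_nonneg: "nonneg (G_kappa x)"
  unfolding nonneg_def G_kappa_def by (auto intro: max.coboundedI2 kappa_nonneg[OF supn_nonneg])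

lemma G_kappa_mono: "nonneg x \<Longrightarrow> \<forall>j. x j \<le> y j \<Longrightarrow> G_kappa x i \<le> G_kappa y i"
  unfolding G_kappa_def
  by (intro max.mono G_rho_mono[OF rho1_class_K] kappa_mono[OF supn_nonneg] supn_mono) auto

lemma G_kappa_tendsto:
  assumes "pointwise_limit x l" "\<forall>m. nonneg (x m)" "nonneg l"
  shows "pointwise_limit (\<lambda>m. G_kappa (x m)) (G_kappa l)"
  unfolding pointwise_limit_def G_kappa_def
proof
  fix i
  have "(\<lambda>m. kappa (supn (x m)) - kappa (supn l)) \<longlonglongrightarrow> 0"
    by (rule Lim_null_comparison[OF _ tendsto_rabs_zero[OF LIM_zero[OF pointwise_limit_supn[OF assms(1)]]]])
      (simp add: kappa_lipschitz supn_nonneg)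
  then have "(\<lambda>m. kappa (supn (x m))) \<longlonglongrightarrow> kappa (supn l)"
    by (simp add: LIM_zero_iff)
  moreover have "(\<lambda>m. T1 (x m) i) \<longlonglongrightarrow> T1 l i" "(\<lambda>m. x m i / 2) \<longlonglongrightarrow> l i / 2"
    using G_rho_tendsto[OF rho1_class_K assms] assms(1)
    unfolding pointwise_limit_def by (auto intro: tendsto_divide)
  ultimately show "(\<lambda>m. max (max (T1 (x m) i) (x m i / 2)) (kappa (supn (x m)))) \<longlonglongrightarrow>
      max (max (T1 l i) (l i / 2)) (kappa (supn l))"
    by (intro tendsto_max)
qed

lemma G_kappa_iterate_tendsto:
  assumes "pointwise_limit x l" "\<forall>m. nonneg (x m)" "nonneg l"
  shows "pointwise_limit (\<lambda>m. (G_kappa ^^ n) (x m)) ((G_kappa ^^ n) l)"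
proof (induction n)
  case (Suc n)
  then show ?case
    using G_kappa_tendsto[OF Suc] G_kappa_nonneg assms by (cases n) auto
qed (use assms in simp)

lemma G_kappa_no_joint_increase:
  assumes w: "nonneg w" "\<forall>i. w i \<le> G_kappa w i"
  shows "w = (\<lambda>_. 0)"
proof (rule ccontr)
  assume "w \<noteq> (\<lambda>_. 0)"
  then have r: "0 < supn w" using supn_pos w(1) by blast
  have "w i \<le> max (kappa (supn w)) (T1 w i)" for i
  proof (cases "w i \<le> 0")
    case True
    then show ?thesis using kappa_nonneg[of "supn w"] r by auto
  next
    case False
    then have "w i / 2 < w i" by simp
    moreover have "w i \<le> max (max (T1 w i) (w i / 2)) (kappa (supn w))"
      using w(2) by (simp add: G_kappa_def)
    ultimately show ?thesis by (auto simp: max_def split: if_splits)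
  qed
  then have "w \<in> MBI_set T1 (kappa (supn w))"
    using w(1) by (simp add: MBI_set_def)
  then show False
    using kappa_bound[OF r] r by force
qed

definition decay_set :: "('i \<Rightarrow> real) set" where
  "decay_set = {x. nonneg x \<and> (\<forall>i. G_kappa x i \<le> x i)}"

lemma decay_set_nonneg: "x \<in> decay_set \<Longrightarrow> nonneg x"
  by (simp add: decay_set_def)

lemma G_kappa_decay_set: "x \<in> decay_set \<Longrightarrow> G_kappa x \<in> decay_set"
  unfolding decay_set_def using G_kappa_nonneg G_kappa_mono by blast

lemma G_kappa_iterate_decay_set: "x \<in> decay_set \<Longrightarrow> (G_kappa ^^ m) x \<in> decay_set"
  by (induction m) (auto intro: G_kappa_decay_set)

lemma G_kappa_iterate_decreasing: "x \<in> decay_set \<Longrightarrow> (G_kappa ^^ Suc m) x i \<le> (G_kappa ^^ m) x i"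
  using G_kappa_iterate_decay_set[of x m] unfolding decay_set_def by simp

lemma supn_G_kappa: "nonneg x \<Longrightarrow> supn x / 2 \<le> supn (G_kappa x)"
proof -
  assume "nonneg x"
  then obtain j where j: "x j = supn x" using supn_attained_nonneg by blast
  have "x j / 2 \<le> G_kappa x j" by (simp add: G_kappa_def)
  then show ?thesis using le_supn[of "G_kappa x" j] j by linarith
qed

lemma supn_G_kappa_iterate: "x \<in> decay_set \<Longrightarrow> supn x / 2 ^ m \<le> supn ((G_kappa ^^ m) x)"
proof (induction m)
  case (Suc m)
  have "supn x / 2 ^ Suc m \<le> supn ((G_kappa ^^ m) x) / 2"
    using Suc by (simp add: divide_right_mono)
  also have "\<dots> \<le> supn ((G_kappa ^^ Suc m) x)"
    using supn_G_kappa[OF decay_set_nonneg[OF G_kappa_iterate_decay_set[OF Suc.prems]]] by simp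
  finally show ?case .
qed simp

lemma G_kappa_iterates_tendsto_0:
  assumes x: "x \<in> decay_set"
  shows "pointwise_limit (\<lambda>m. (G_kappa ^^ m) x) (\<lambda>_. 0)"
proof -
  have nonneg: "\<forall>m. nonneg ((G_kappa ^^ m) x)"
    using G_kappa_iterate_decay_set[OF x] decay_set_nonneg by blast
  then obtain l where l: "pointwise_limit (\<lambda>m. (G_kappa ^^ m) x) l"
    using decseq_pointwise_convergent[of "\<lambda>m. (G_kappa ^^ m) x" 0]
      G_kappa_iterate_decreasing[OF x] unfolding nonneg_def by blast
  have l_nonneg: "nonneg l"
    using pointwise_limit_nonneg[OF l nonneg] .
  have "pointwise_limit (\<lambda>m. G_kappa ((G_kappa ^^ m) x)) (G_kappa l)"
    using G_kappa_tendsto[OF l nonneg l_nonneg] .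
  moreover have "pointwise_limit (\<lambda>m. G_kappa ((G_kappa ^^ m) x)) l"
    using pointwise_limit_Suc[OF l] by simp
  ultimately have "G_kappa l = l"
    using pointwise_limit_unique by blast
  then have "l = (\<lambda>_. 0)"
    using G_kappa_no_joint_increase[OF l_nonneg] by simp
  then show ?thesis using l by simp
qed

text \<open>Kleene iteration from the constant vector \<open>r\<close> converges, as \<open>MBI_set T1 r\<close> is bounded.\<close>

lemma MBI_fixed_point:
  assumes r: "0 < r"
  obtains X where "nonneg X" "\<And>i. X i = max r (T1 X i)"
proof -
  define w where "w = rec_nat (\<lambda>_. r) (\<lambda>_ w. (\<lambda>i. max r (T1 w i)))"
  have w_0: "w 0 = (\<lambda>_. r)" and w_Suc: "w (Suc m) = (\<lambda>i. max r (T1 (w m) i))" for m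
    by (simp_all add: w_def)
  have w_nonneg: "nonneg (w m)" for m
    by (cases m) (use r in \<open>auto simp: w_0 w_Suc nonneg_def\<close>)
  have w_inc: "w m i \<le> w (Suc m) i" for m i
  proof (induction m arbitrary: i)
    case (Suc m)
    have "T1 (w m) i \<le> T1 (w (Suc m)) i"
      using G_rho_mono[OF rho1_class_K w_nonneg] Suc.IH by blast
    moreover have "w (Suc m) i = max r (T1 (w m) i)" "w (Suc (Suc m)) i = max r (T1 (w (Suc m)) i)"
      by (simp_all only: w_Suc)
    ultimately show ?case by (metis max.mono order_refl)
  qed (simp add: w_0 w_Suc)
  have "w m \<in> MBI_set T1 r" for m
  proof (cases m)
    case (Suc k)
    have "T1 (w k) i \<le> T1 (w m) i" for i
      using G_rho_mono[OF rho1_class_K w_nonneg] w_inc Suc by blast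
    moreover have "w m i = max r (T1 (w k) i)" for i
      using Suc by (simp only: w_Suc)
    ultimately have "w m i \<le> max r (T1 (w m) i)" for i
      by (metis max.mono order_refl)
    then show ?thesis
      using w_nonneg by (simp add: MBI_set_def)
  qed (use r in \<open>simp add: MBI_set_def w_0 nonneg_def\<close>)
  moreover obtain R where "\<forall>s\<in>MBI_set T1 r. supn s \<le> R"
    using MBI_set_bounded r by force
  ultimately have "w m i \<le> R" for m i
    using le_supn[of "w m" i] by (meson order_trans)
  then obtain X where X: "pointwise_limit w X"
    using incseq_pointwise_convergent[of w R] w_inc by blast
  have X_nonneg: "nonneg X"
    using pointwise_limit_nonneg[OF X] w_nonneg by blast
  have "pointwise_limit (\<lambda>m. w (Suc m)) (\<lambda>i. max r (T1 X i))"
    using G_rho_tendsto[OF rho1_class_K X _ X_nonneg] w_nonneg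
    unfolding pointwise_limit_def w_Suc by (auto intro: tendsto_max)
  then have "X i = max r (T1 X i)" for i
    using pointwise_limit_unique[OF pointwise_limit_Suc[OF X]] by metis
  with X_nonneg that show ?thesis by blast
qed

lemma decay_set_unbounded:
  assumes r: "0 < r"
  shows "\<exists>X\<in>decay_set. r \<le> supn X"
proof -
  obtain X where X_nonneg: "nonneg X" and X: "\<And>i. X i = max r (T1 X i)"
    using MBI_fixed_point[OF r] by blast
  have X_ge: "r \<le> X i" and T1_X: "T1 X i \<le> X i" for i
    using X[of i] by simp_all
  have r_le: "r \<le> supn X"
    using X_ge le_supn order_trans by blast
  have "x \<le> r" if "x \<in> eta_set (supn X)" for x
  proof (rule ccontr)
    assume "\<not> x \<le> r"
    then have "X i \<le> max x (T1 X i)" for i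
      using X[of i] by (auto simp: max_def)
    then have "X \<in> MBI_set T1 x"
      using X_nonneg by (simp add: MBI_set_def)
    then have "supn X \<le> supn X / 2"
      using that by (simp add: eta_set_def)
    then show False using r_le r by linarith
  qed
  then have "eta (supn X) \<le> r"
    unfolding eta_def by (intro cSup_least) (use zero_in_eta_set[OF supn_nonneg] in auto)
  then have "kappa (supn X) \<le> r / 2"
    using lipschitz_minorant_le[of eta, OF eta_nonneg eta_mono, of "supn X" "supn X"] supn_nonneg[of X]
    by (simp add: kappa_def)
  then have "G_kappa X i \<le> X i" for i
    using T1_X[of i] X_ge[of i] r by (simp add: G_kappa_def)
  then show ?thesis
    using X_nonneg r_le by (auto simp: decay_set_def)
qed

definition decay_image :: "nat \<Rightarrow> ('i \<Rightarrow> real) set" where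
  "decay_image m = (G_kappa ^^ m) ` decay_set"

definition decay_core :: "('i \<Rightarrow> real) set" where
  "decay_core = (\<Inter>m. decay_image m)"

lemma decay_image_Suc_subset: "decay_image (Suc m) \<subseteq> decay_image m"
proof
  fix x assume "x \<in> decay_image (Suc m)"
  then obtain z where z: "z \<in> decay_set" "x = (G_kappa ^^ m) (G_kappa z)"
    by (auto simp: decay_image_def funpow_Suc_right simp del: funpow.simps)
  then show "x \<in> decay_image m"
    using G_kappa_decay_set[OF z(1)] by (auto simp: decay_image_def)
qed

lemma decay_image_antimono: "m \<le> m' \<Longrightarrow> decay_image m' \<subseteq> decay_image m"
  by (rule lift_Suc_antimono_le[of decay_image, OF decay_image_Suc_subset])

lemma decay_image_subset: "decay_image m \<subseteq> decay_set"
  unfolding decay_image_def using G_kappa_iterate_decay_set by blast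

lemma decay_core_subset: "decay_core \<subseteq> decay_set"
  using decay_image_subset by (auto simp: decay_core_def)

text \<open>Preimages under \<open>G_kappa ^^ M\<close> of a bounded sequence are bounded by \<open>supn_G_kappa_iterate\<close>, so
  \<open>decay_image M\<close> is closed under bounded limits.\<close>

lemma decay_image_closed:
  assumes l: "pointwise_limit x l" and x: "\<forall>j. x j \<in> decay_image M" and B: "\<forall>j. supn (x j) \<le> B"
  shows "l \<in> decay_image M"
proof -
  have "\<forall>j. \<exists>z. z \<in> decay_set \<and> x j = (G_kappa ^^ M) z"
    using x unfolding decay_image_def by blast
  then obtain z where z: "\<forall>j. z j \<in> decay_set \<and> x j = (G_kappa ^^ M) (z j)"
    by metis
  have "supn (z j) \<le> 2 ^ M * B" for j
    using supn_G_kappa_iterate[of "z j" M] z B by (simp add: divide_le_eq mult.commute order_trans)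
  then obtain q z' where q: "strict_mono q" and z': "pointwise_limit (z \<circ> q) z'"
    using bounded_imp_pointwise_convergent_subseq by blast
  have zq_nonneg: "\<forall>j. nonneg ((z \<circ> q) j)"
    using z decay_set_nonneg by auto
  have z'_nonneg: "nonneg z'"
    using pointwise_limit_nonneg[OF z' zq_nonneg] .
  have "G_kappa z' i \<le> z' i" for i
    using pointwise_limit_le[OF G_kappa_tendsto[OF z' zq_nonneg z'_nonneg] z'] z
    by (auto simp: decay_set_def)
  then have "z' \<in> decay_set"
    using z'_nonneg by (simp add: decay_set_def)
  moreover have "pointwise_limit (\<lambda>j. (G_kappa ^^ M) ((z \<circ> q) j)) l"
    using pointwise_limit_subseq[OF l q] z by (simp add: o_def)
  then have "l = (G_kappa ^^ M) z'"
    using pointwise_limit_unique G_kappa_iterate_tendsto[OF z' zq_nonneg z'_nonneg] by blast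
  ultimately show ?thesis by (simp add: decay_image_def)
qed

lemma limit_in_decay_core:
  assumes l: "pointwise_limit (x \<circ> q) l" and q: "strict_mono q"
    and x: "\<forall>m. x m \<in> decay_image m" and B: "\<forall>m. supn (x m) \<le> B"
  shows "l \<in> decay_core"
proof -
  have "l \<in> decay_image M" for M
  proof (rule decay_image_closed)
    show "pointwise_limit (\<lambda>j. x (q (j + M))) l"
      using l unfolding pointwise_limit_def
      by (auto intro: LIMSEQ_ignore_initial_segment[where k = M, simplified])
    have "M \<le> q (j + M)" for j
      using seq_suble[OF q, of "j + M"] by simp
    then show "\<forall>j. x (q (j + M)) \<in> decay_image M"
      using x decay_image_antimono by blast
  qed (use B in blast)
  then show ?thesis by (simp add: decay_core_def)
qed

text \<open>The norms of the iterates of a large element of \<open>decay_set\<close> tend to \<open>0\<close> and at most halve in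
  each step, so one of them lies in \<open>(1, 2]\<close>.\<close>

lemma decay_image_normalized: "\<exists>x. x \<in> decay_image m \<and> 1 < supn x \<and> supn x \<le> 2"
proof -
  obtain X where X: "X \<in> decay_set" "2 ^ (m + 2) \<le> supn X"
    using decay_set_unbounded[of "2 ^ (m + 2)"] by auto
  have "(\<lambda>j. supn ((G_kappa ^^ j) X)) \<longlonglongrightarrow> 0"
    using pointwise_limit_supn[OF G_kappa_iterates_tendsto_0[OF X(1)]] by simp
  then have "eventually (\<lambda>j. supn ((G_kappa ^^ j) X) < 2) sequentially"
    by (rule order_tendstoD) simp
  then obtain j0 where j0: "supn ((G_kappa ^^ j0) X) \<le> 2"
    by (meson eventually_sequentially less_imp_le order_refl)
  define js where "js = (LEAST j. supn ((G_kappa ^^ j) X) \<le> 2)"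
  have js: "supn ((G_kappa ^^ js) X) \<le> 2"
    unfolding js_def using j0 by (rule LeastI)
  have large: "4 \<le> supn ((G_kappa ^^ j) X)" if "j \<le> m" for j
  proof -
    have "(2::real) ^ (m + 2) / 2 ^ j = 2 ^ (m + 2 - j)"
      using that by (simp add: power_diff)
    moreover have "(2::real) ^ 2 \<le> 2 ^ (m + 2 - j)"
      using that by (intro power_increasing) auto
    moreover have "(2::real) ^ (m + 2) / 2 ^ j \<le> supn X / 2 ^ j"
      using X(2) by (intro divide_right_mono) auto
    ultimately show ?thesis
      using supn_G_kappa_iterate[OF X(1), of j] by simp
  qed
  have "m < js"
  proof (rule ccontr)
    assume "\<not> m < js"
    then show False using large[of js] js by simp
  qed
  then obtain j' where j': "js = Suc j'" by (cases js) auto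
  have "2 < supn ((G_kappa ^^ j') X)"
    using not_less_Least[of j' "\<lambda>j. supn ((G_kappa ^^ j) X) \<le> 2"] j' by (simp add: js_def)
  moreover have "supn ((G_kappa ^^ j') X) / 2 \<le> supn ((G_kappa ^^ js) X)"
    using supn_G_kappa[OF decay_set_nonneg[OF G_kappa_iterate_decay_set[OF X(1)]], of j'] j' by simp
  moreover have "(G_kappa ^^ js) X \<in> decay_image m"
    using decay_image_antimono[of m js] \<open>m < js\<close> X(1) by (auto simp: decay_image_def)
  ultimately show ?thesis using js by (intro exI[of _ "(G_kappa ^^ js) X"]) auto
qed

lemma decay_core_nonzero: "\<exists>x\<in>decay_core. 1 \<le> supn x"
proof -
  obtain x where x: "\<forall>m. x m \<in> decay_image m \<and> 1 < supn (x m) \<and> supn (x m) \<le> 2"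
    using decay_image_normalized by metis
  then obtain q l where q: "strict_mono q" and l: "pointwise_limit (x \<circ> q) l"
    using bounded_imp_pointwise_convergent_subseq[of x 2] by blast
  have "1 \<le> supn l"
    using pointwise_limit_supn[OF l] x by (intro LIMSEQ_le_const) (auto intro: less_imp_le)
  moreover have "l \<in> decay_core"
    using limit_in_decay_core[OF l q] x by blast
  ultimately show ?thesis by blast
qed

lemma decay_core_preimage:
  assumes x: "x \<in> decay_core"
  shows "\<exists>y\<in>decay_core. G_kappa y = x"
proof -
  have "\<exists>y. y \<in> decay_image m \<and> G_kappa y = x \<and> supn y \<le> 2 * supn x" for m
  proof -
    have "x \<in> decay_image (Suc m)"
      using x by (simp add: decay_core_def)
    then obtain z where z: "z \<in> decay_set" "x = (G_kappa ^^ Suc m) z"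
      unfolding decay_image_def by blast
    show ?thesis
      using supn_G_kappa[OF decay_set_nonneg[OF G_kappa_iterate_decay_set[OF z(1)]], of m] z
      by (intro exI[of _ "(G_kappa ^^ m) z"]) (auto simp: decay_image_def)
  qed
  then obtain y where y: "\<forall>m. y m \<in> decay_image m \<and> G_kappa (y m) = x \<and> supn (y m) \<le> 2 * supn x"
    by metis
  then obtain q l where q: "strict_mono q" and l: "pointwise_limit (y \<circ> q) l"
    using bounded_imp_pointwise_convergent_subseq[of y "2 * supn x"] by blast
  have yq_nonneg: "\<forall>j. nonneg ((y \<circ> q) j)"
    using y decay_image_subset decay_set_nonneg by fastforce
  have "pointwise_limit (\<lambda>j. G_kappa ((y \<circ> q) j)) (G_kappa l)"
    using G_kappa_tendsto[OF l yq_nonneg pointwise_limit_nonneg[OF l yq_nonneg]] .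
  moreover have "(\<lambda>j. G_kappa ((y \<circ> q) j)) = (\<lambda>j. x)"
    using y by auto
  ultimately have "G_kappa l = x"
    using pointwise_limit_const pointwise_limit_unique by metis
  moreover have "l \<in> decay_core"
    using limit_in_decay_core[OF l q] y by blast
  ultimately show ?thesis by blast
qed

end

definition decay_chain :: "(('i \<Rightarrow> real) \<Rightarrow> 'i \<Rightarrow> real) \<Rightarrow> (int \<Rightarrow> 'i \<Rightarrow> real) \<Rightarrow> bool" where
  "decay_chain T y \<longleftrightarrow> (\<forall>k i. 0 < y k i) \<and> (\<forall>k i. y k i \<le> y (k + 1) i) \<and>
     (\<forall>k i. T (y (k + 1)) i \<le> y k i) \<and>
     (\<forall>e>0. \<exists>K. \<forall>k\<le>K. \<forall>i. y k i \<le> e) \<and> (\<forall>B. \<exists>K. \<forall>k\<ge>K. \<forall>i. B \<le> y k i)"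

definition strict_decay_chain :: "(('i \<Rightarrow> real) \<Rightarrow> 'i \<Rightarrow> real) \<Rightarrow> (int \<Rightarrow> 'i \<Rightarrow> real) \<Rightarrow> bool" where
  "strict_decay_chain T y \<longleftrightarrow> (\<forall>k i. 0 < y k i) \<and> (\<forall>k i. y k i < y (k + 1) i) \<and>
     (\<forall>k i. T (y (k + 1)) i \<le> y k i) \<and>
     (\<forall>e>0. \<exists>K. \<forall>k\<le>K. \<forall>i. y k i \<le> e) \<and> (\<forall>B. \<exists>K. \<forall>k\<ge>K. \<forall>i. B \<le> y k i)"

lemma int_chain_mono:
  fixes f :: "int \<Rightarrow> real"
  assumes "\<And>k. f k \<le> f (k + 1)" "k \<le> k'"
  shows "f k \<le> f k'"
  using assms(2)
proof (induction k' rule: int_ge_induct)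
  case (step k')
  then show ?case using assms(1)[of k'] by linarith
qed simp

context NJI_gain
begin

lemma backward_orbit_unbounded:
  assumes d: "\<And>k. d k \<in> decay_set" "\<And>k. G_kappa (d (Suc k)) = d k" and d0: "d 0 \<noteq> (\<lambda>_. 0)"
  shows "\<exists>k. r < supn (d k)"
proof (rule ccontr)
  assume "\<not> ?thesis"
  then have "d k i \<le> r" for k i
    using le_supn[of "d k" i] by (meson not_less order_trans)
  moreover have d_inc: "d k i \<le> d (Suc k) i" for k i
    using d(1)[of "Suc k"] d(2)[of k] by (auto simp: decay_set_def)
  ultimately obtain l where l: "pointwise_limit d l"
    using incseq_pointwise_convergent[of d r] by blast
  have d_nonneg: "\<forall>k. nonneg (d k)"
    using d(1) decay_set_nonneg by blast
  have l_nonneg: "nonneg l"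
    using pointwise_limit_nonneg[OF l d_nonneg] .
  have "pointwise_limit (\<lambda>k. G_kappa (d (Suc k))) (G_kappa l)"
    using G_kappa_tendsto[OF pointwise_limit_Suc[OF l]] d_nonneg l_nonneg by blast
  then have "pointwise_limit d (G_kappa l)"
    using d(2) by simp
  then have "G_kappa l = l"
    using pointwise_limit_unique[OF _ l] by blast
  then have "l = (\<lambda>_. 0)"
    using G_kappa_no_joint_increase[OF l_nonneg] by simp
  moreover have "d 0 i \<le> l i" for i
    using pointwise_limit_ge_const[OF l] lift_Suc_mono_le[of "\<lambda>k. d k i", OF d_inc] by blast
  ultimately have "d 0 i \<le> 0" for i
    by simp
  then show False
    using d0 d_nonneg unfolding nonneg_def by (meson antisym ext)
qed

lemma backward_orbit:
  assumes "x0 \<in> decay_core"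
  obtains d where "d 0 = x0" "\<And>k. d k \<in> decay_set" "\<And>k. G_kappa (d (Suc k)) = d k"
    "\<And>k i. x0 i \<le> d k i"
proof -
  obtain pre where pre: "\<And>x. x \<in> decay_core \<Longrightarrow> pre x \<in> decay_core \<and> G_kappa (pre x) = x"
    using decay_core_preimage by metis
  define d where "d k = (pre ^^ k) x0" for k
  have d_core: "d k \<in> decay_core" for k
    by (induction k) (use assms pre in \<open>auto simp: d_def\<close>)
  have d_step: "G_kappa (d (Suc k)) = d k" for k
    using pre d_core by (simp add: d_def)
  have d_inc: "d k i \<le> d (Suc k) i" for k i
    using d_core[of "Suc k"] decay_core_subset d_step[of k] by (auto simp: decay_set_def)
  show ?thesis
  proof
    show "d 0 = x0" by (simp add: d_def)
    show "d k \<in> decay_set" for k using d_core decay_core_subset by blast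
    show "G_kappa (d (Suc k)) = d k" for k by (rule d_step)
    show "x0 i \<le> d k i" for k i
      using lift_Suc_mono_le[of "\<lambda>k. d k i", OF d_inc, of 0 k] by (simp add: d_def)
  qed
qed

lemma G_kappa_iterates_small:
  assumes "x \<in> decay_set" "0 < e"
  shows "\<exists>M. \<forall>m\<ge>M. supn ((G_kappa ^^ m) x) < e"
proof -
  have "(\<lambda>m. supn ((G_kappa ^^ m) x)) \<longlonglongrightarrow> 0"
    using pointwise_limit_supn[OF G_kappa_iterates_tendsto_0[OF assms(1)]] by simp
  then have "eventually (\<lambda>m. supn ((G_kappa ^^ m) x) < e) sequentially"
    by (rule order_tendstoD(2)[OF _ assms(2)])
  then show ?thesis
    by (auto simp: eventually_sequentially)
qed

lemma G_kappa_bi_orbit: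
  obtains c :: "int \<Rightarrow> 'i \<Rightarrow> real"
  where "\<And>k. c k = G_kappa (c (k + 1))" "\<And>k. c k \<in> decay_set" "\<And>k. 0 < supn (c k)"
    "\<And>e. 0 < e \<Longrightarrow> \<exists>K. \<forall>k\<le>K. supn (c k) < e" "\<And>r. \<exists>k. r < supn (c k)"
proof -
  obtain x0 where x0: "x0 \<in> decay_core" "1 \<le> supn x0"
    using decay_core_nonzero by blast
  have x0_decay: "x0 \<in> decay_set"
    using x0(1) decay_core_subset by blast
  obtain d where d: "d 0 = x0" "\<And>k. d k \<in> decay_set" "\<And>k. G_kappa (d (Suc k)) = d k"
    and x0_le: "\<And>k i. x0 i \<le> d k i"
    using backward_orbit[OF x0(1)] by blast
  have d_supn: "1 \<le> supn (d k)" for k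
  proof -
    have "\<forall>i. x0 i \<le> d k i" using x0_le by blast
    then have "supn x0 \<le> supn (d k)" by (rule supn_mono[OF decay_set_nonneg[OF x0_decay]])
    then show ?thesis using x0(2) by linarith
  qed
  define e where "e m = (G_kappa ^^ m) x0" for m
  define c where "c k = (if 0 \<le> k then d (nat k) else e (nat (- k)))" for k :: int
  show ?thesis
  proof
    show "c k = G_kappa (c (k + 1))" for k
    proof (cases "0 \<le> k")
      case True
      then show ?thesis using d(3)[of "nat k"] by (simp add: c_def nat_add_distrib)
    next
      case False
      then have "nat (- k) = Suc (nat (- (k + 1)))" by simp
      then show ?thesis using False d(1) by (auto simp: c_def e_def)
    qed
    show "c k \<in> decay_set" for k
      using d(2) G_kappa_iterate_decay_set[OF x0_decay] by (simp add: c_def e_def)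
    show "0 < supn (c k)" for k
    proof (cases "0 \<le> k")
      case True
      then show ?thesis using d_supn[of "nat k"] by (simp add: c_def)
    next
      case False
      have "0 < supn x0 / 2 ^ nat (- k)"
        using x0(2) by simp
      then show ?thesis
        using False supn_G_kappa_iterate[OF x0_decay, of "nat (- k)"] by (simp add: c_def e_def)
    qed
    show "\<exists>K. \<forall>k\<le>K. supn (c k) < \<epsilon>" if "0 < \<epsilon>" for \<epsilon>
    proof -
      obtain M where M: "\<forall>m\<ge>M. supn (e m) < \<epsilon>"
        using G_kappa_iterates_small[OF x0_decay \<open>0 < \<epsilon>\<close>] by (auto simp: e_def)
      have "supn (c k) < \<epsilon>" if "k \<le> - int M - 1" for k
      proof -
        have "M \<le> nat (- k)" "\<not> 0 \<le> k" using that by auto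
        then show ?thesis using M by (simp add: c_def)
      qed
      then show ?thesis by blast
    qed
    show "\<exists>k. r < supn (c k)" for r
    proof -
      have "d 0 \<noteq> (\<lambda>_. 0)"
        using d_supn[of 0] by auto
      then obtain k where "r < supn (d k)"
        using backward_orbit_unbounded[of d, OF d(2,3)] by blast
      then have "r < supn (c (int k))"
        by (simp add: c_def)
      then show ?thesis ..
    qed
  qed
qed

lemma decay_chain_exists: "\<exists>c. decay_chain T1 c"
proof -
  obtain c :: "int \<Rightarrow> 'i \<Rightarrow> real" where c_step: "\<And>k. c k = G_kappa (c (k + 1))" and c_decay: "\<And>k. c k \<in> decay_set"
    and c_supn: "\<And>k. 0 < supn (c k)" and c_small: "\<And>e. 0 < e \<Longrightarrow> \<exists>K. \<forall>k\<le>K. supn (c k) < e"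
    and c_large: "\<And>r. \<exists>k. r < supn (c k)"
    by (rule G_kappa_bi_orbit) blast
  have c_ge_kappa: "kappa (supn (c (k + 1))) \<le> c k i" for k i
    by (subst c_step[of k]) (simp add: G_kappa_def)
  have c_inc: "c k i \<le> c (k + 1) i" for k i
    using c_decay[of "k + 1"] by (subst c_step[of k]) (simp add: decay_set_def)
  have "decay_chain T1 c"
    unfolding decay_chain_def
  proof (intro conjI allI impI)
    show "0 < c k i" for k i
      using c_ge_kappa[of k i] kappa_pos[OF c_supn] by (meson order_less_le_trans)
    show "c k i \<le> c (k + 1) i" for k i
      by (rule c_inc)
    show "T1 (c (k + 1)) i \<le> c k i" for k i
      by (subst c_step[of k]) (simp add: G_kappa_def)
    show "\<exists>K. \<forall>k\<le>K. \<forall>i. c k i \<le> e" if e: "0 < e" for e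
    proof -
      obtain K where K: "\<forall>k\<le>K. supn (c k) < e"
        using c_small[OF e] by blast
      have "c k i \<le> e" if "k \<le> K" for k i
        using K that le_supn[of "c k" i] by fastforce
      then show ?thesis by blast
    qed
    show "\<exists>K. \<forall>k\<ge>K. \<forall>i. B \<le> c k i" for B
    proof -
      obtain r where r: "0 \<le> r" "B \<le> kappa r" using kappa_unbounded by blast
      obtain k0 where k0: "r < supn (c k0)" using c_large by blast
      have "B \<le> c k i" if "k0 \<le> k" for k i
      proof -
        have "c k0 j \<le> c (k + 1) j" for j
          using int_chain_mono[of "\<lambda>k. c k j" k0 "k + 1"] c_inc that by simp
        then have "supn (c k0) \<le> supn (c (k + 1))"
          using supn_mono[OF decay_set_nonneg[OF c_decay]] by blast
        then have "kappa r \<le> kappa (supn (c (k + 1)))"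
          using kappa_mono r(1) k0 by simp
        then show ?thesis using r(2) c_ge_kappa[of k i] by linarith
      qed
      then show ?thesis by blast
    qed
  qed
  then show ?thesis by blast
qed

end

definition theta :: "int \<Rightarrow> real" where
  "theta k = 1 / 2 + arctan (real_of_int k) / 4"

lemma theta_less: "theta k < theta (k + 1)"
  unfolding theta_def using arctan_less_iff[of "real_of_int k" "real_of_int (k + 1)"] by simp

lemma theta_bounds: "1 / 2 - pi / 8 < theta k" "theta k < 1"
  unfolding theta_def using arctan_bounded[of "real_of_int k"] pi_less_4 by auto

lemma convex_combination_strict_mono:
  fixes t t' c c' a a' :: real
  assumes "t < t'" "0 < t" "t' < 1" "c \<le> c'" "a \<le> a'" "a' < c'"
  shows "t * c + (1 - t) * a < t' * c' + (1 - t') * a'"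
proof -
  have "t * c + (1 - t) * a \<le> t * c' + (1 - t) * a'"
    using assms by (intro add_mono mult_left_mono) auto
  moreover have "0 < (t' - t) * (c' - a')"
    using assms by simp
  ultimately show ?thesis by (simp add: algebra_simps)
qed

lemma theta_average:
  fixes c a :: "int \<Rightarrow> 'i \<Rightarrow> real"
  assumes a_nonneg: "\<And>k i. 0 \<le> a k i" and a_less: "\<And>k i. a k i < c k i"
    and c_inc: "\<And>k i. c k i \<le> c (k + 1) i" and a_inc: "\<And>k i. a k i \<le> a (k + 1) i"
  defines "y \<equiv> \<lambda>k i. theta k * c k i + (1 - theta k) * a k i"
  shows "y k i \<le> c k i" "a k i \<le> y k i" "(1 / 2 - pi / 8) * c k i \<le> y k i" "y k i < y (k + 1) i"
proof -
  have \<theta>: "0 < theta k" "theta k < 1" for k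
    using theta_bounds[of k] pi_less_4 by linarith+
  have "(1 - theta k) * a k i \<le> (1 - theta k) * c k i" "theta k * a k i \<le> theta k * c k i"
    using a_less[of k i] \<theta>[of k] by (auto intro: mult_left_mono)
  then show "y k i \<le> c k i" "a k i \<le> y k i"
    by (simp_all add: y_def algebra_simps)
  have "(1 / 2 - pi / 8) * c k i \<le> theta k * c k i"
    using theta_bounds(1)[of k] a_nonneg[of k i] a_less[of k i] by (intro mult_right_mono) auto
  moreover have "0 \<le> (1 - theta k) * a k i"
    using \<theta>[of k] a_nonneg[of k i] by simp
  ultimately show "(1 / 2 - pi / 8) * c k i \<le> y k i"
    by (simp add: y_def)
  show "y k i < y (k + 1) i"
    unfolding y_def by (rule convex_combination_strict_mono[OF theta_less \<theta>(1) \<theta>(2) c_inc a_inc a_less])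
qed

context NJI_gain
begin

definition rho2 :: "real \<Rightarrow> real" where
  "rho2 x = rho1 x / 2"

lemma rho2_class_Kinf: "class_Kinf rho2"
  unfolding rho2_def using class_Kinf_divide[OF rho1_class_Kinf] by simp

lemma rho2_class_K: "class_K rho2"
  using rho2_class_Kinf by (rule class_Kinf_imp_class_K)

abbreviation T2 where "T2 \<equiv> G_rho rho2"

lemma T2_less:
  assumes "nonneg s" "0 < x" "T1 s i \<le> x"
  shows "T2 s i < x"
proof (cases "G s i = 0")
  case True
  then show ?thesis using assms class_K_0[OF rho2_class_K] by (simp add: G_rho_eq)
next
  case False
  then have "0 < rho1 (G s i)"
    using G_nonneg[OF assms(1), of i] class_K_pos[OF rho1_class_K] by simp
  then show ?thesis using assms(3) by (simp add: G_rho_eq rho2_def)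
qed

text \<open>Moving each \<open>c k\<close> strictly below itself towards \<open>T2 (c (k + 1))\<close>, by the weights \<open>theta k\<close>
  which increase strictly in \<open>k\<close> and stay away from \<open>0\<close>, makes the chain strictly increasing.\<close>

lemma decay_chain_imp_strict_decay_chain:
  assumes c: "decay_chain T1 c"
  defines "y \<equiv> \<lambda>k i. theta k * c k i + (1 - theta k) * T2 (c (k + 1)) i"
  shows "strict_decay_chain T2 y"
proof -
  have c_pos: "0 < c k i" and c_inc: "c k i \<le> c (k + 1) i" and c_decay: "T1 (c (k + 1)) i \<le> c k i"
    and c_small: "\<forall>e>0. \<exists>K. \<forall>k\<le>K. \<forall>i. c k i \<le> e" and c_large: "\<forall>B. \<exists>K. \<forall>k\<ge>K. \<forall>i. B \<le> c k i"
    for k i using c by (auto simp: decay_chain_def)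
  have c_nonneg: "nonneg (c k)" for k
    using c_pos by (simp add: nonneg_def less_imp_le)
  define a where "a k i = T2 (c (k + 1)) i" for k i
  have a_inc: "a k i \<le> a (k + 1) i" for k i
  proof -
    have "\<forall>j. c (k + 1) j \<le> c (k + 1 + 1) j" using c_inc by blast
    then show ?thesis using G_rho_mono[OF rho2_class_K c_nonneg] by (simp add: a_def)
  qed
  have a_nonneg: "0 \<le> a k i" and a_less: "a k i < c k i" for k i
    using G_rho_nonneg[OF rho2_class_K c_nonneg] T2_less[OF c_nonneg c_pos c_decay] by (simp_all add: a_def)
  have y_eq: "y k i = theta k * c k i + (1 - theta k) * a k i" for k i
    by (simp add: y_def a_def)
  note average = theta_average[of a c, OF a_nonneg a_less c_inc a_inc, folded y_eq]
  have y_le: "y k i \<le> c k i" and y_ge_a: "a k i \<le> y k i"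
    and y_ge_c: "(1 / 2 - pi / 8) * c k i \<le> y k i" and y_less: "y k i < y (k + 1) i" for k i
    using average by simp_all
  have t: "0 < 1 / 2 - pi / 8"
    using pi_less_4 by simp
  have y_pos: "0 < y k i" for k i
    using y_ge_c[of k i] mult_pos_pos[OF t c_pos[of k i]] by linarith
  show ?thesis
    unfolding strict_decay_chain_def
  proof (intro conjI)
    show "\<forall>k i. 0 < y k i" "\<forall>k i. y k i < y (k + 1) i"
      using y_pos y_less by blast+
    have "T2 (y (k + 1)) i \<le> y k i" for k i
      using G_rho_mono[OF rho2_class_K, of "y (k + 1)" "c (k + 1)" i] y_pos y_le y_ge_a[of k i]
      by (simp add: a_def nonneg_def less_imp_le)
    then show "\<forall>k i. T2 (y (k + 1)) i \<le> y k i"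
      by blast
    show "\<forall>e>0. \<exists>K. \<forall>k\<le>K. \<forall>i. y k i \<le> e"
      using c_small y_le order_trans by meson
    show "\<forall>B. \<exists>K. \<forall>k\<ge>K. \<forall>i. B \<le> y k i"
    proof
      fix B
      obtain K where K: "\<forall>k\<ge>K. \<forall>i. max B 0 / (1 / 2 - pi / 8) \<le> c k i"
        using c_large by blast
      have "B \<le> y k i" if "K \<le> k" for k i
      proof -
        have "max B 0 / (1 / 2 - pi / 8) \<le> c k i"
          using K that by blast
        then have "max B 0 \<le> (1 / 2 - pi / 8) * c k i"
          using t by (simp add: pos_divide_le_eq mult.commute)
        then show ?thesis using y_ge_c[of k i] by linarith
      qed
      then show "\<exists>K. \<forall>k\<ge>K. \<forall>i. B \<le> y k i" by blast
    qed
  qed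
qed

lemma strict_decay_chain_exists: "\<exists>y. strict_decay_chain T2 y"
  using decay_chain_exists decay_chain_imp_strict_decay_chain by blast

end

section \<open>Piecewise linear interpolation of a chain\<close>

definition pow2 :: "int \<Rightarrow> real" where
  "pow2 k = 2 powr (real_of_int k)"

lemma pow2_pos: "0 < pow2 k"
  by (simp add: pow2_def)

lemma pow2_add_1: "pow2 (k + 1) = 2 * pow2 k"
  by (simp add: pow2_def powr_add)

lemma pow2_less_iff: "pow2 k < pow2 k' \<longleftrightarrow> k < k'"
  by (simp add: pow2_def)

lemma floor_log_pow2: "0 < r \<Longrightarrow> pow2 \<lfloor>log 2 r\<rfloor> \<le> r \<and> r < pow2 (\<lfloor>log 2 r\<rfloor> + 1)"
  unfolding pow2_def using floor_log_eq_powr_iff[of r 2 "\<lfloor>log 2 r\<rfloor>"] by simp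

lemma floor_log_eqI:
  assumes "pow2 k \<le> r" "r < pow2 (k + 1)"
  shows "\<lfloor>log 2 r\<rfloor> = k"
proof -
  have "0 < r" using assms(1) pow2_pos[of k] by linarith
  then show ?thesis using floor_log_eq_powr_iff[of r 2 k] assms by (simp add: pow2_def)
qed

lemma dyadic_piecewise_mono:
  fixes f :: "real \<Rightarrow> real"
  assumes piece: "\<And>k a b. k0 \<le> k \<Longrightarrow> k < K \<Longrightarrow> pow2 k \<le> a \<Longrightarrow> a \<le> b \<Longrightarrow> b \<le> pow2 (k + 1) \<Longrightarrow> f a \<le> f b"
    and "k0 \<le> K" "pow2 k0 \<le> a" "a \<le> b" "b \<le> pow2 K"
  shows "f a \<le> f b"
proof -
  have "\<forall>a b. pow2 k0 \<le> a \<longrightarrow> a \<le> b \<longrightarrow> b \<le> pow2 K' \<longrightarrow> f a \<le> f b" if "k0 \<le> K'" "K' \<le> K" for K'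
    using that
  proof (induction K' rule: int_ge_induct)
    case base
    then show ?case by (metis order_antisym order_trans order_refl)
  next
    case (step K')
    show ?case
    proof (intro allI impI)
      fix a b assume ab: "pow2 k0 \<le> a" "a \<le> b" "b \<le> pow2 (K' + 1)"
      have below: "f a \<le> f b" if "pow2 k0 \<le> a" "a \<le> b" "b \<le> pow2 K'" for a b
        using step that by simp
      have top: "f a \<le> f b" if "pow2 K' \<le> a" "a \<le> b" "b \<le> pow2 (K' + 1)" for a b
        using piece[of K' a b] step.hyps step.prems that by simp
      show "f a \<le> f b"
      proof (cases "b \<le> pow2 K'")
        case True
        then show ?thesis using below ab by blast
      next
        case False
        show ?thesis
        proof (cases "pow2 K' \<le> a")
          case True
          then show ?thesis using top ab by blast
        next
          case a_below: False
          have "f a \<le> f (pow2 K')" using below ab a_below by simp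
          also have "\<dots> \<le> f b" using top[of "pow2 K'" b] ab False by simp
          finally show ?thesis .
        qed
      qed
    qed
  qed
  then show ?thesis using assms by blast
qed

lemma ordered_bounds_abs:
  fixes f :: "real \<Rightarrow> real"
  assumes bounds: "\<And>a b. a \<in> S \<Longrightarrow> b \<in> S \<Longrightarrow> a \<le> b \<Longrightarrow> m * (b - a) \<le> f b - f a \<and> f b - f a \<le> M * (b - a)"
    and "0 \<le> m" "a \<in> S" "b \<in> S"
  shows "m * \<bar>b - a\<bar> \<le> \<bar>f b - f a\<bar> \<and> \<bar>f b - f a\<bar> \<le> M * \<bar>b - a\<bar>"
proof (cases "a \<le> b")
  case True
  moreover have "0 \<le> m * (b - a)" using True assms(2) by simp
  ultimately show ?thesis using bounds[of a b] assms(3,4) by auto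
next
  case False
  moreover have "0 \<le> m * (a - b)" using False assms(2) by simp
  ultimately show ?thesis using bounds[of b a] assms(3,4) by (auto simp: abs_minus_commute)
qed

locale bi_infinite_chain =
  fixes y :: "int \<Rightarrow> 'i::finite \<Rightarrow> real"
  assumes chain_pos: "\<And>k i. 0 < y k i" and chain_less: "\<And>k i. y k i < y (k + 1) i"
    and chain_small: "\<And>e. 0 < e \<Longrightarrow> \<exists>K. \<forall>k\<le>K. \<forall>i. y k i \<le> e"
    and chain_large: "\<And>B. \<exists>K. \<forall>k\<ge>K. \<forall>i. B \<le> y k i"
begin

lemma chain_mono: "k \<le> k' \<Longrightarrow> y k i \<le> y k' i"
  using int_chain_mono[of "\<lambda>k. y k i"] chain_less less_imp_le by blast

definition interp :: "real \<Rightarrow> 'i \<Rightarrow> real" where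
  "interp r i = (if r \<le> 0 then 0 else
     y \<lfloor>log 2 r\<rfloor> i + (r / pow2 \<lfloor>log 2 r\<rfloor> - 1) * (y (\<lfloor>log 2 r\<rfloor> + 1) i - y \<lfloor>log 2 r\<rfloor> i))"

lemma interp_nonpos: "r \<le> 0 \<Longrightarrow> interp r i = 0"
  by (simp add: interp_def)

lemma interp_eq:
  assumes r: "pow2 k \<le> r" "r \<le> pow2 (k + 1)"
  shows "interp r i = y k i + (r / pow2 k - 1) * (y (k + 1) i - y k i)"
proof (cases "r < pow2 (k + 1)")
  case True
  then show ?thesis
    using floor_log_eqI[OF r(1)] r(1) pow2_pos[of k] by (simp add: interp_def)
next
  case False
  then have r_eq: "r = pow2 (k + 1)" using r by simp
  have "\<lfloor>log 2 r\<rfloor> = k + 1"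
    using floor_log_eqI[of "k + 1" r] pow2_less_iff[of "k + 1" "k + 1 + 1"] r_eq by simp
  then show ?thesis
    using r_eq pow2_pos[of k] pow2_pos[of "k + 1"] by (simp add: interp_def pow2_add_1)
qed

lemma interp_pow2: "interp (pow2 k) i = y k i"
  using interp_eq[of k "pow2 k" i] pow2_add_1[of k] pow2_pos[of k] by simp

lemma interp_between:
  assumes "pow2 k \<le> r" "r \<le> pow2 (k + 1)"
  shows "y k i \<le> interp r i \<and> interp r i \<le> y (k + 1) i"
proof -
  have t: "0 \<le> r / pow2 k - 1" "r / pow2 k - 1 \<le> 1"
    using assms pow2_pos[of k] pow2_add_1[of k] by (auto simp: field_simps)
  have d: "0 \<le> y (k + 1) i - y k i"
    using chain_less[of k i] by simp
  have "0 \<le> (r / pow2 k - 1) * (y (k + 1) i - y k i)"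
    using t(1) d by simp
  moreover have "(r / pow2 k - 1) * (y (k + 1) i - y k i) \<le> y (k + 1) i - y k i"
    using mult_left_le_one_le[OF d t(1) t(2)] .
  ultimately show ?thesis
    using interp_eq[OF assms, of i] by linarith
qed

lemma interp_diff:
  assumes "pow2 k \<le> a" "a \<le> b" "b \<le> pow2 (k + 1)"
  shows "interp b i - interp a i = (b - a) * ((y (k + 1) i - y k i) / pow2 k)"
  using interp_eq[of k a i] interp_eq[of k b i] assms pow2_pos[of k]
  by (simp add: field_simps)

text \<open>On finitely many dyadic intervals the slopes of the pieces are bounded away from \<open>0\<close> and \<open>\<infinity>\<close>.\<close>

lemma interp_bi_lipschitz:
  assumes "k0 < K"
  obtains m M where "0 < m" "m \<le> M" "\<And>i a b. pow2 k0 \<le> a \<Longrightarrow> a \<le> b \<Longrightarrow> b \<le> pow2 K \<Longrightarrow>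
      m * (b - a) \<le> interp b i - interp a i \<and> interp b i - interp a i \<le> M * (b - a)"
proof -
  define slope where "slope k i = (y (k + 1) i - y k i) / pow2 k" for k i
  define S where "S = (\<lambda>(k, i). slope k i) ` ({k0..<K} \<times> UNIV)"
  have S: "finite S" "S \<noteq> {}"
    using assms by (auto simp: S_def)
  have m: "Min S \<le> slope k i" and M: "slope k i \<le> Max S" if "k0 \<le> k" "k < K" for k i
    using that S by (auto simp: S_def intro!: Min_le Max_ge)
  have "0 < Min S"
    using S chain_less pow2_pos by (auto simp: S_def slope_def Min_gr_iff)
  moreover have "Min S \<le> Max S"
    using S Min_le[OF S(1)] Max_ge[OF S(1)] by (meson ex_in_conv order_trans)
  moreover have "Min S * (b - a) \<le> interp b i - interp a i \<and> interp b i - interp a i \<le> Max S * (b - a)"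
    if "pow2 k0 \<le> a" "a \<le> b" "b \<le> pow2 K" for i a b
  proof -
    have "interp a i - Min S * a \<le> interp b i - Min S * b"
    proof (rule dyadic_piecewise_mono[of k0 K, where f = "\<lambda>x. interp x i - Min S * x"])
      fix k a b assume k: "k0 \<le> k" "k < K" and ab: "pow2 k \<le> a" "a \<le> b" "b \<le> pow2 (k + 1)"
      have "Min S * (b - a) \<le> slope k i * (b - a)"
        using m[OF k] ab by (intro mult_right_mono) auto
      then show "interp a i - Min S * a \<le> interp b i - Min S * b"
        using interp_diff[OF ab, of i] by (simp add: slope_def algebra_simps)
    qed (use that assms in auto)
    moreover have "Max S * a - interp a i \<le> Max S * b - interp b i"
    proof (rule dyadic_piecewise_mono[of k0 K, where f = "\<lambda>x. Max S * x - interp x i"])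
      fix k a b assume k: "k0 \<le> k" "k < K" and ab: "pow2 k \<le> a" "a \<le> b" "b \<le> pow2 (k + 1)"
      have "slope k i * (b - a) \<le> Max S * (b - a)"
        using M[OF k] ab by (intro mult_right_mono) auto
      then show "Max S * a - interp a i \<le> Max S * b - interp b i"
        using interp_diff[OF ab, of i] by (simp add: slope_def algebra_simps)
    qed (use that assms in auto)
    ultimately show ?thesis by (simp add: algebra_simps)
  qed
  ultimately show ?thesis using that by blast
qed

lemma interp_pos: "0 < r \<Longrightarrow> 0 < interp r i"
  using interp_between[of "\<lfloor>log 2 r\<rfloor>" r i] floor_log_pow2[of r] chain_pos[of "\<lfloor>log 2 r\<rfloor>" i]
  by fastforce

lemma interp_nonneg: "0 \<le> interp r i"
  using interp_pos[of r i] interp_nonpos[of r i] by (cases "r \<le> 0") auto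

lemma interp_strict_mono:
  assumes "0 \<le> a" "a < b"
  shows "interp a i < interp b i"
proof (cases "a = 0")
  case True
  then show ?thesis using interp_pos[of b i] interp_nonpos[of 0 i] assms by simp
next
  case False
  then have a: "0 < a" using assms by simp
  have "pow2 \<lfloor>log 2 a\<rfloor> \<le> a" "b < pow2 (\<lfloor>log 2 b\<rfloor> + 1)"
    using floor_log_pow2[OF a] floor_log_pow2[of b] assms a by auto
  moreover from this have "\<lfloor>log 2 a\<rfloor> < \<lfloor>log 2 b\<rfloor> + 1"
    using assms pow2_less_iff by (meson le_less_trans less_trans)
  ultimately obtain m M where "0 < m" "m * (b - a) \<le> interp b i - interp a i"
    using interp_bi_lipschitz[of "\<lfloor>log 2 a\<rfloor>" "\<lfloor>log 2 b\<rfloor> + 1"] assms by (metis less_imp_le)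
  moreover have "0 < m * (b - a) \<longleftrightarrow> 0 < m" using assms by (simp add: zero_less_mult_iff)
  ultimately show ?thesis by linarith
qed

lemma interp_mono: "0 \<le> a \<Longrightarrow> a \<le> b \<Longrightarrow> interp a i \<le> interp b i"
  using interp_strict_mono[of a b i] by (cases "a = b") auto

lemma interp_continuous_at_0: "continuous (at 0 within {0..}) (\<lambda>r. interp r i)"
  unfolding continuous_within_eps_delta
proof (intro allI impI)
  fix e :: real assume "0 < e"
  then obtain K where K: "\<forall>k\<le>K. \<forall>i. y k i \<le> e / 2"
    using chain_small[of "e / 2"] by auto
  have "dist (interp x' i) (interp 0 i) < e" if "x' \<in> {0..}" "dist x' 0 < pow2 K" for x'
    using interp_mono[of x' "pow2 K" i] interp_nonneg[of x' i] K[rule_format, of K i]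
      interp_pow2[of K i] that \<open>0 < e\<close> by (simp add: dist_real_def interp_nonpos)
  then show "\<exists>d>0. \<forall>x'\<in>{0..}. dist x' 0 < d \<longrightarrow> dist (interp x' i) (interp 0 i) < e"
    using pow2_pos by blast
qed

lemma interp_isCont:
  assumes x: "0 < x"
  shows "isCont (\<lambda>r. interp r i) x"
proof -
  define k where "k = \<lfloor>log 2 x\<rfloor>"
  have x_in: "pow2 (k - 1) < x" "x < pow2 (k + 2)"
    using floor_log_pow2[OF x] pow2_less_iff[of "k - 1" k] pow2_less_iff[of "k + 1" "k + 2"]
    by (auto simp: k_def)
  have "k - 1 < k + 2" by simp
  then obtain m M where "0 < m" "m \<le> M" and bounds: "\<And>i a b. pow2 (k - 1) \<le> a \<Longrightarrow> a \<le> b \<Longrightarrow>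
      b \<le> pow2 (k + 2) \<Longrightarrow> m * (b - a) \<le> interp b i - interp a i \<and> interp b i - interp a i \<le> M * (b - a)"
    using interp_bi_lipschitz by blast
  have "lipschitz_on M {pow2 (k - 1)..pow2 (k + 2)} (\<lambda>r. interp r i)"
    unfolding lipschitz_on_def dist_real_def
  proof (intro conjI ballI)
    show "0 \<le> M" using \<open>0 < m\<close> \<open>m \<le> M\<close> by simp
    fix a b assume "a \<in> {pow2 (k - 1)..pow2 (k + 2)}" "b \<in> {pow2 (k - 1)..pow2 (k + 2)}"
    then show "\<bar>interp a i - interp b i\<bar> \<le> M * \<bar>a - b\<bar>"
      using ordered_bounds_abs[of "{pow2 (k - 1)..pow2 (k + 2)}" m "\<lambda>r. interp r i" M b a]
        bounds \<open>0 < m\<close> by auto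
  qed
  then have "continuous_on {pow2 (k - 1)..pow2 (k + 2)} (\<lambda>r. interp r i)"
    by (rule lipschitz_on_continuous_on)
  then show ?thesis
    by (rule continuous_on_interior) (use x_in in \<open>simp add: interior_atLeastAtMost_real\<close>)
qed

lemma interp_continuous_on: "continuous_on {0..} (\<lambda>r. interp r i)"
  unfolding continuous_on_eq_continuous_within
  using interp_continuous_at_0 interp_isCont continuous_at_imp_continuous_at_within
  by (metis atLeast_iff order_le_less)

lemma interp_class_Kinf: "class_Kinf (\<lambda>r. interp r i)"
proof (rule class_KinfI)
  show "\<exists>r\<ge>0. M < interp r i" for M
  proof -
    obtain K where "\<forall>k\<ge>K. \<forall>i. M + 1 \<le> y k i"
      using chain_large by blast
    then have "M + 1 \<le> y K i" by blast
    then show ?thesis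
      using interp_pow2[of K i] pow2_pos[of K] by (intro exI[of _ "pow2 K"]) auto
  qed
qed (auto simp: interp_continuous_on interp_strict_mono interp_nonpos)

lemma interp_Kinv_bounds:
  assumes "0 < a"
  obtains kl kh where "kl < kh"
    "\<And>i v. a \<le> v \<Longrightarrow> v \<le> b \<Longrightarrow> Kinv (\<lambda>r. interp r i) v \<in> {pow2 kl..pow2 kh}"
proof -
  obtain K0 where K0: "\<forall>k\<le>K0. \<forall>i. y k i \<le> a / 2"
    using chain_small[of "a / 2"] assms by auto
  obtain K1 where K1: "\<forall>k\<ge>K1. \<forall>i. b + 1 \<le> y k i"
    using chain_large by blast
  define kl where "kl = min K0 (K1 - 1)"
  define kh where "kh = max K1 (kl + 1)"
  have "Kinv (\<lambda>r. interp r i) v \<in> {pow2 kl..pow2 kh}" if v: "a \<le> v" "v \<le> b" for i v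
  proof -
    have inv: "0 \<le> Kinv (\<lambda>r. interp r i) v" "interp (Kinv (\<lambda>r. interp r i) v) i = v"
      using Kinv_nonneg[OF interp_class_Kinf] f_Kinv[OF interp_class_Kinf] v assms by auto
    have "y kl i \<le> a / 2" "b + 1 \<le> y kh i"
      using K0 K1 by (simp_all add: kl_def kh_def)
    then have lo: "interp (pow2 kl) i < v" and hi: "v < interp (pow2 kh) i"
      using interp_pow2[of kl i] interp_pow2[of kh i] v assms by auto
    have "pow2 kl \<le> Kinv (\<lambda>r. interp r i) v"
    proof (rule ccontr)
      assume "\<not> ?thesis"
      then have "v \<le> interp (pow2 kl) i"
        using interp_mono[OF inv(1), of "pow2 kl" i] inv(2) by simp
      then show False using lo by simp
    qed
    moreover have "Kinv (\<lambda>r. interp r i) v \<le> pow2 kh"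
    proof (rule ccontr)
      assume "\<not> ?thesis"
      then have "interp (pow2 kh) i \<le> v"
        using interp_mono[of "pow2 kh" "Kinv (\<lambda>r. interp r i) v" i] inv(2) pow2_pos[of kh] by simp
      then show False using hi by simp
    qed
    ultimately show ?thesis by simp
  qed
  then show ?thesis using that[of kl kh] by (simp add: kh_def)
qed

lemma interp_inverse_bi_lipschitz:
  assumes C: "compact C" "C \<subseteq> {0<..}"
  shows "\<exists>l L. 0 < l \<and> l \<le> L \<and> (\<forall>r1\<in>C. \<forall>r2\<in>C. \<forall>i.
      l * \<bar>r1 - r2\<bar> \<le> \<bar>Kinv (\<lambda>r. interp r i) r1 - Kinv (\<lambda>r. interp r i) r2\<bar> \<and>
      \<bar>Kinv (\<lambda>r. interp r i) r1 - Kinv (\<lambda>r. interp r i) r2\<bar> \<le> L * \<bar>r1 - r2\<bar>)"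
proof (cases "C = {}")
  case True
  then show ?thesis by (intro exI[of _ 1]) auto
next
  case False
  obtain a b where a: "a \<in> C" "\<forall>v\<in>C. a \<le> v" and b: "\<forall>v\<in>C. v \<le> b"
    using compact_attains_inf[OF C(1) False] compact_attains_sup[OF C(1) False] by blast
  have "0 < a" using a C(2) by auto
  obtain kl kh where k: "kl < kh" and range: "\<And>i v. a \<le> v \<Longrightarrow> v \<le> b \<Longrightarrow>
      Kinv (\<lambda>r. interp r i) v \<in> {pow2 kl..pow2 kh}"
    using interp_Kinv_bounds[OF \<open>0 < a\<close>] by blast
  obtain m M where m: "0 < m" "m \<le> M" and bounds: "\<And>i a b. pow2 kl \<le> a \<Longrightarrow> a \<le> b \<Longrightarrow> b \<le> pow2 kh \<Longrightarrow>
      m * (b - a) \<le> interp b i - interp a i \<and> interp b i - interp a i \<le> M * (b - a)"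
    using interp_bi_lipschitz[OF k] by blast
  have abs_bounds: "m * \<bar>u1 - u2\<bar> \<le> \<bar>interp u1 i - interp u2 i\<bar> \<and>
      \<bar>interp u1 i - interp u2 i\<bar> \<le> M * \<bar>u1 - u2\<bar>"
    if "u1 \<in> {pow2 kl..pow2 kh}" "u2 \<in> {pow2 kl..pow2 kh}" for u1 u2 i
    using ordered_bounds_abs[of "{pow2 kl..pow2 kh}" m "\<lambda>r. interp r i" M u2 u1] bounds m that by auto
  have "m * \<bar>Kinv (\<lambda>r. interp r i) r1 - Kinv (\<lambda>r. interp r i) r2\<bar> \<le> \<bar>r1 - r2\<bar> \<and>
      \<bar>r1 - r2\<bar> \<le> M * \<bar>Kinv (\<lambda>r. interp r i) r1 - Kinv (\<lambda>r. interp r i) r2\<bar>"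
    if "r1 \<in> C" "r2 \<in> C" for r1 r2 i
  proof -
    have "interp (Kinv (\<lambda>r. interp r i) r1) i = r1" "interp (Kinv (\<lambda>r. interp r i) r2) i = r2"
      using f_Kinv[OF interp_class_Kinf] that C(2) by auto
    moreover have "Kinv (\<lambda>r. interp r i) r1 \<in> {pow2 kl..pow2 kh}" "Kinv (\<lambda>r. interp r i) r2 \<in> {pow2 kl..pow2 kh}"
      using range a b that by auto
    ultimately show ?thesis
      using abs_bounds by metis
  qed
  then show ?thesis
    using m by (intro exI[of _ "1 / M"] exI[of _ "1 / m"]) (auto simp: field_simps frac_le)
qed

end

section \<open>Consequences of a strict decay chain\<close>

definition ancestors :: "('i \<Rightarrow> 'i set) \<Rightarrow> 'i \<Rightarrow> 'i set" where
  "ancestors Iset i = {j. \<exists>k. (j, i) \<in> edges Iset ^^ k}"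

lemma self_in_ancestors [simp]: "i \<in> ancestors Iset i"
  unfolding ancestors_def by (auto intro: exI[of _ 0])

lemma ancestors_closed: "j \<in> ancestors Iset i \<Longrightarrow> l \<in> Iset j \<Longrightarrow> l \<in> ancestors Iset i"
  unfolding ancestors_def edges_def by (auto intro: relpow_Suc_I2)

lemma ancestors_in_nbhd:
  fixes Iset :: "'i::finite \<Rightarrow> 'i set"
  obtains n where "\<And>i. ancestors Iset i \<subseteq> in_nbhd Iset i n"
proof -
  define len where "len p = (LEAST k. (snd p, fst p) \<in> edges Iset ^^ k)" for p :: "'i \<times> 'i"
  define n where "n = Max (range len)"
  have "j \<in> in_nbhd Iset i n" if "j \<in> ancestors Iset i" for i j
  proof -
    have "(j, i) \<in> edges Iset ^^ len (i, j)"
      using that unfolding ancestors_def len_def by (auto intro: LeastI_ex)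
    moreover have "len (i, j) \<le> n"
      unfolding n_def by (rule Max_ge) auto
    ultimately show ?thesis
      unfolding in_nbhd_def by blast
  qed
  then show ?thesis using that by blast
qed

locale chain_gain = gain Iset \<gamma> \<mu> + bi_infinite_chain y
  for Iset :: "'i::finite \<Rightarrow> 'i set" and \<gamma> \<mu> and y :: "int \<Rightarrow> 'i \<Rightarrow> real" +
  fixes \<rho> :: "real \<Rightarrow> real"
  assumes rho: "class_Kinf \<rho>" and chain_decay: "\<And>k i. G_rho \<rho> (y (k + 1)) i \<le> y k i"
begin

abbreviation T where "T \<equiv> G_rho \<rho>"

lemma rho_class_K: "class_K \<rho>"
  using rho by (rule class_Kinf_imp_class_K)

lemma interp_nonneg_vec: "nonneg (interp r)"
  using interp_nonneg by (simp add: nonneg_def)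

definition chain_min :: "int \<Rightarrow> real" where
  "chain_min k = Min (range (y k))"

lemma chain_min_le: "chain_min k \<le> y k i"
  unfolding chain_min_def by (rule Min_le) auto

lemma chain_min_attained: "\<exists>i. chain_min k = y k i"
proof -
  have "chain_min k \<in> range (y k)"
    unfolding chain_min_def by (rule Min_in) auto
  then show ?thesis by auto
qed

lemma lower_chain: "bi_infinite_chain (\<lambda>k (_::'i). chain_min (k - 1))"
proof
  show "0 < chain_min (k - 1)" for k
    using chain_min_attained chain_pos by metis
  show "chain_min (k - 1) < chain_min (k + 1 - 1)" for k
  proof -
    obtain i where "chain_min k = y k i"
      using chain_min_attained by blast
    then show ?thesis
      using chain_min_le[of "k - 1" i] chain_less[of "k - 1" i] by simp
  qed
  show "\<exists>K. \<forall>k\<le>K. \<forall>i::'i. chain_min (k - 1) \<le> e" if e: "0 < e" for e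
  proof -
    obtain K where K: "\<forall>k\<le>K. \<forall>i. y k i \<le> e"
      using chain_small[OF e] by blast
    have "chain_min (k - 1) \<le> e" if "k \<le> K" for k
      using K[rule_format, of "k - 1" undefined] chain_min_le[of "k - 1" undefined] that by simp
    then show ?thesis by blast
  qed
  show "\<exists>K. \<forall>k\<ge>K. \<forall>i::'i. B \<le> chain_min (k - 1)" for B
  proof -
    obtain K where K: "\<forall>k\<ge>K. \<forall>i. B \<le> y k i" using chain_large by blast
    have "B \<le> chain_min (k - 1)" if "K + 1 \<le> k" for k
    proof -
      obtain i where "chain_min (k - 1) = y (k - 1) i"
        using chain_min_attained by blast
      then show ?thesis using K that by simp
    qed
    then show ?thesis by blast
  qed
qed

interpretation lower: bi_infinite_chain "\<lambda>k (_::'i). chain_min (k - 1)"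
  by (rule lower_chain)

text \<open>The lower chain does not depend on its index, so any index, here \<open>undefined\<close>, may be used.\<close>

definition alpha :: "real \<Rightarrow> real" where
  "alpha r = lower.interp r undefined"

definition phi_max :: "real \<Rightarrow> real" where
  "phi_max r = (\<Sum>i\<in>UNIV. interp r i)"

lemma alpha_class_Kinf: "class_Kinf alpha"
  unfolding alpha_def using lower.interp_class_Kinf .

lemma phi_max_class_Kinf: "class_Kinf phi_max"
  unfolding phi_max_def using class_Kinf_sum[of "\<lambda>i r. interp r i"] interp_class_Kinf by blast

lemma alpha_le_interp: "alpha r \<le> interp r i"
proof (cases "r \<le> 0")
  case True
  then show ?thesis by (simp add: alpha_def lower.interp_nonpos interp_nonpos)
next
  case False
  define k where "k = \<lfloor>log 2 r\<rfloor>"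
  have r: "pow2 k \<le> r" "r \<le> pow2 (k + 1)"
    using floor_log_pow2[of r] False by (auto simp: k_def less_imp_le)
  have "alpha r \<le> chain_min k"
    using lower.interp_between[OF r, of undefined] by (simp add: alpha_def)
  also have "\<dots> \<le> interp r i"
    using chain_min_le[of k i] interp_between[OF r, of i] by linarith
  finally show ?thesis .
qed

lemma interp_le_phi_max: "interp r i \<le> phi_max r"
  unfolding phi_max_def by (rule member_le_sum) (auto simp: interp_nonneg)

lemma interp_decay: "T (interp r) i \<le> interp r i"
proof (cases "r \<le> 0")
  case True
  then have "interp r = (\<lambda>_. 0)" by (auto simp: interp_nonpos)
  then show ?thesis using G_rho_zero[OF rho_class_K] by simp
next
  case False
  define k where "k = \<lfloor>log 2 r\<rfloor>"
  have r: "pow2 k \<le> r" "r \<le> pow2 (k + 1)"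
    using floor_log_pow2[of r] False by (auto simp: k_def less_imp_le)
  have "T (interp r) i \<le> T (y (k + 1)) i"
    using G_rho_mono[OF rho_class_K interp_nonneg_vec] interp_between[OF r] by blast
  also have "\<dots> \<le> y k i" by (rule chain_decay)
  also have "\<dots> \<le> interp r i" using interp_between[OF r] by blast
  finally show ?thesis .
qed

lemma path_strict_decay_interp: "path_strict_decay Iset \<gamma> \<mu> interp"
  unfolding path_strict_decay_def
proof (intro conjI)
  show "\<exists>\<rho>. class_Kinf \<rho> \<and> (\<forall>r\<ge>0. \<forall>i. G_rho \<rho> (interp r) i \<le> interp r i)"
    using rho interp_decay by blast
  show "\<exists>\<phi>min \<phi>max. class_Kinf \<phi>min \<and> class_Kinf \<phi>max \<and>
      (\<forall>r\<ge>0. \<forall>i. \<phi>min r \<le> interp r i \<and> interp r i \<le> \<phi>max r)"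
    using alpha_class_Kinf phi_max_class_Kinf alpha_le_interp interp_le_phi_max by blast
  show "\<forall>i. class_Kinf (\<lambda>r. interp r i)"
    using interp_class_Kinf by blast
qed (use interp_inverse_bi_lipschitz in blast)

lemma descent:
  assumes s: "nonneg s" "\<forall>i. s i \<le> max (b i) (T s i)" and b: "\<forall>i. b i \<le> y j i"
    and "j \<le> k" "\<forall>i. s i \<le> y k i"
  shows "\<forall>i. s i \<le> y j i"
  using assms(4,5)
proof (induction k rule: int_ge_induct)
  case (step k)
  have "s i \<le> y k i" for i
  proof -
    have "T s i \<le> T (y (k + 1)) i"
      using G_rho_mono[OF rho_class_K s(1)] step.prems by blast
    also have "\<dots> \<le> y k i" by (rule chain_decay)
    finally have "T s i \<le> y k i" .
    moreover have "b i \<le> y k i"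
      using b chain_mono[OF step.hyps] order_trans by blast
    ultimately show ?thesis
      using s(2) by (meson max.boundedI order_trans)
  qed
  then show ?case using step.IH by blast
qed

lemma dominating_level: "\<exists>k\<ge>j. \<forall>i. s i \<le> y k i"
proof -
  obtain K where K: "\<forall>k\<ge>K. \<forall>i. supn s \<le> y k i"
    using chain_large by blast
  have "s i \<le> y (max K j) i" for i
    using K[rule_format, of "max K j" i] le_supn[of s i] by simp
  then show ?thesis by (intro exI[of _ "max K j"]) auto
qed

lemma le_chain_level:
  assumes "nonneg s" "\<forall>i. s i \<le> max (b i) (T s i)" "\<forall>i. b i \<le> y K i"
  shows "\<forall>i. s i \<le> y K i"
proof -
  obtain k where "K \<le> k" "\<forall>i. s i \<le> y k i"
    using dominating_level by blast
  then show ?thesis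
    using descent[OF assms] by blast
qed

lemma Kinv_alpha_pos:
  assumes "0 < R"
  shows "0 < Kinv alpha R"
proof -
  have "0 \<le> Kinv alpha R" "alpha (Kinv alpha R) = R"
    using Kinv_nonneg[OF alpha_class_Kinf] f_Kinv[OF alpha_class_Kinf] assms by auto
  moreover have "alpha 0 = 0"
    using class_K_0[OF class_Kinf_imp_class_K[OF alpha_class_Kinf]] .
  ultimately show ?thesis
    using assms by (cases "Kinv alpha R = 0") auto
qed

lemma below_chain_level:
  assumes "0 < R" "nonneg b" "supn b \<le> R"
  shows "\<forall>i. b i \<le> y (\<lfloor>log 2 (Kinv alpha R)\<rfloor> + 1) i"
proof
  fix i
  define q where "q = Kinv alpha R"
  have q: "0 < q" "alpha q = R"
    using Kinv_alpha_pos[OF assms(1)] f_Kinv[OF alpha_class_Kinf] assms(1) by (auto simp: q_def)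
  have "b i \<le> R"
    using assms(3) le_supn[of b i] by linarith
  also have "\<dots> \<le> interp q i"
    using alpha_le_interp[of q i] q by simp
  also have "\<dots> \<le> y (\<lfloor>log 2 q\<rfloor> + 1) i"
    using interp_between[of "\<lfloor>log 2 q\<rfloor>" q i] floor_log_pow2[OF q(1)] by simp
  finally show "b i \<le> y (\<lfloor>log 2 (Kinv alpha R)\<rfloor> + 1) i"
    by (simp add: q_def)
qed

lemma supn_le_phi_max: "nonneg s \<Longrightarrow> \<forall>i. s i \<le> y k i \<Longrightarrow> supn s \<le> phi_max (pow2 k)"
  using supn_attained_nonneg[of s] interp_pow2[of k] interp_le_phi_max[of "pow2 k"]
  by (metis order_trans)

lemma phi_max_mono: "0 \<le> a \<Longrightarrow> a \<le> b \<Longrightarrow> phi_max a \<le> phi_max b"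
  using class_K_mono[OF class_Kinf_imp_class_K[OF phi_max_class_Kinf]] .

lemma oplus_MBI_chain: "oplus_MBI T"
  unfolding oplus_MBI_def
proof (intro exI conjI allI impI)
  show "class_Kinf (\<lambda>r. phi_max (2 * Kinv alpha r))"
    using class_Kinf_comp[OF class_Kinf_scale[OF phi_max_class_Kinf, of 2] class_Kinf_Kinv[OF alpha_class_Kinf]]
    by simp
  fix s b :: "'i \<Rightarrow> real"
  assume s: "nonneg s" and b: "nonneg b" and sb: "\<forall>i. s i \<le> vmax b (T s) i"
  then have sb': "\<forall>i. s i \<le> max (b i) (T s i)" by (simp add: vmax_def)
  show "supn s \<le> phi_max (2 * Kinv alpha (supn b))"
  proof (cases "supn b = 0")
    case True
    have small: "s i \<le> e" if e: "0 < e" for i e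
    proof -
      obtain K where K: "\<forall>k\<le>K. \<forall>i. y k i \<le> e"
        using chain_small[OF e] by blast
      have "\<forall>i. b i \<le> y K i"
        using True chain_pos by (simp add: supn_eq_0_iff less_imp_le)
      then have "s i \<le> y K i"
        using le_chain_level[OF s sb'] by blast
      then show ?thesis using K[rule_format, of K i] by linarith
    qed
    have "s i \<le> 0" for i
      by (rule field_le_epsilon) (simp add: small)
    then have "supn s \<le> 0"
      using s by (simp add: supn_le_iff nonneg_def)
    moreover have "0 \<le> phi_max (2 * Kinv alpha (supn b))"
      using class_K_nonneg[OF class_Kinf_imp_class_K[OF phi_max_class_Kinf]]
        Kinv_nonneg[OF alpha_class_Kinf supn_nonneg[of b]] by simp
    ultimately show ?thesis by linarith
  next
    case False
    then have R: "0 < supn b" using supn_nonneg[of b] by simp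
    define q where "q = Kinv alpha (supn b)"
    define k where "k = \<lfloor>log 2 q\<rfloor>"
    have q: "0 < q" "pow2 k \<le> q"
      using Kinv_alpha_pos[OF R] floor_log_pow2[of q] by (auto simp: q_def k_def)
    have "\<forall>i. s i \<le> y (k + 1) i"
      using le_chain_level[OF s sb'] below_chain_level[OF R b order_refl] by (simp add: k_def q_def)
    then have "supn s \<le> phi_max (pow2 (k + 1))"
      using supn_le_phi_max[OF s] by blast
    also have "\<dots> \<le> phi_max (2 * q)"
      using phi_max_mono[of "pow2 (k + 1)" "2 * q"] q pow2_pos[of "k + 1"] by (simp add: pow2_add_1)
    finally show ?thesis by (simp add: q_def)
  qed
qed

lemma iterate_below_chain:
  assumes "nonneg s" "\<forall>i. s i \<le> y k i"
  shows "\<forall>i. (T ^^ n) s i \<le> y (k - int n) i"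
proof (induction n)
  case (Suc n)
  have "(T ^^ Suc n) s i \<le> y (k - int (Suc n)) i" for i
  proof -
    have "(T ^^ Suc n) s i \<le> T (y (k - int (Suc n) + 1)) i"
      using G_rho_mono[OF rho_class_K G_rho_iterate_nonneg[OF rho_class_K assms(1)]] Suc by simp
    also have "\<dots> \<le> y (k - int (Suc n)) i"
      by (rule chain_decay)
    finally show ?thesis .
  qed
  then show ?case by blast
qed (use assms in simp)

definition beta :: "real \<Rightarrow> real \<Rightarrow> real" where
  "beta r t = phi_max (2 / (t + 1) * Kinv alpha r)"

lemma beta_nonneg: "0 \<le> r \<Longrightarrow> 0 \<le> t \<Longrightarrow> 0 \<le> beta r t"
  unfolding beta_def using class_K_nonneg[OF class_Kinf_imp_class_K[OF phi_max_class_Kinf]]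
    Kinv_nonneg[OF alpha_class_Kinf] by simp

lemma UGAS_bound:
  assumes s: "nonneg s"
  shows "supn ((T ^^ n) s) \<le> beta (supn s) (real n)"
proof (cases "supn s = 0")
  case True
  then have "(T ^^ n) s = (\<lambda>_. 0)"
    by (induction n) (auto simp: supn_eq_0_iff G_rho_zero[OF rho_class_K])
  then show ?thesis using beta_nonneg[of "supn s" "real n"] supn_nonneg[of s] by simp
next
  case False
  then have R: "0 < supn s" using supn_nonneg[of s] by simp
  define q where "q = Kinv alpha (supn s)"
  define k where "k = \<lfloor>log 2 q\<rfloor>"
  have q: "0 < q" "pow2 k \<le> q"
    using Kinv_alpha_pos[OF R] floor_log_pow2[of q] by (auto simp: q_def k_def)
  have "\<forall>i. (T ^^ n) s i \<le> y (k + 1 - int n) i"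
    using iterate_below_chain[OF s below_chain_level[OF R s order_refl]] by (simp add: k_def q_def)
  then have "supn ((T ^^ n) s) \<le> phi_max (pow2 (k + 1 - int n))"
    by (rule supn_le_phi_max[OF G_rho_iterate_nonneg[OF rho_class_K s]])
  also have "\<dots> \<le> phi_max (2 / (real n + 1) * q)"
  proof (rule phi_max_mono)
    have "pow2 (k + 1 - int n) = pow2 k * 2 / 2 ^ n"
      by (simp add: pow2_def powr_diff powr_add powr_realpow)
    also have "\<dots> \<le> q * 2 / (real n + 1)"
    proof (rule frac_le)
      have "real (Suc n) \<le> real (2 ^ n)"
        using Suc_leI[OF less_exp[of n]] by (simp only: of_nat_le_iff)
      then show "real n + 1 \<le> 2 ^ n" by simp
    qed (use q in auto)
    finally show "pow2 (k + 1 - int n) \<le> 2 / (real n + 1) * q" by (simp add: mult.commute)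
  qed (use pow2_pos in \<open>auto simp: less_imp_le\<close>)
  finally show ?thesis by (simp add: beta_def q_def)
qed

lemma beta_continuous: "continuous_on ({0..} \<times> {0..}) (\<lambda>(r, t). beta r t)"
proof -
  have cont_Kinv: "continuous_on {0..} (Kinv alpha)"
    using class_K_continuous_on[OF class_Kinf_imp_class_K[OF class_Kinf_Kinv[OF alpha_class_Kinf]]] .
  have "continuous_on ({0..} \<times> {0..}) (\<lambda>p. 2 / (snd p + 1) * Kinv alpha (fst p))"
    by (intro continuous_intros continuous_on_compose2[OF cont_Kinv]) auto
  moreover have "(\<lambda>p. 2 / (snd p + 1) * Kinv alpha (fst p)) ` ({0..} \<times> {0..}) \<subseteq> {0..}"
  proof clarsimp
    fix a b :: real assume "0 \<le> a" "0 \<le> b"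
    then show "0 \<le> 2 * Kinv alpha a / (b + 1)"
      using Kinv_nonneg[OF alpha_class_Kinf, of a] by simp
  qed
  ultimately show ?thesis
    using continuous_on_compose2[OF class_K_continuous_on[OF class_Kinf_imp_class_K[OF phi_max_class_Kinf]]]
    by (simp add: beta_def case_prod_beta)
qed

lemma beta_class_KL: "class_KL beta"
  unfolding class_KL_def
proof (intro conjI allI impI)
  have cont_phi: "continuous_on {0..} phi_max"
    using phi_max_class_Kinf by (simp add: class_Kinf_def class_K_def)
  show "continuous_on ({0..} \<times> {0..}) (\<lambda>(r, t). beta r t)"
    by (rule beta_continuous)
  show "class_K (\<lambda>r. beta r t)" if "0 \<le> t" for t
    using class_Kinf_comp[OF class_Kinf_scale[OF phi_max_class_Kinf, of "2 / (t + 1)"]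
        class_Kinf_Kinv[OF alpha_class_Kinf]] that
    by (simp add: beta_def class_Kinf_def)
  fix r :: real assume r: "0 < r"
  define q where "q = Kinv alpha r"
  have q: "0 < q" using Kinv_alpha_pos[OF r] by (simp add: q_def)
  have "continuous_on {0..} (\<lambda>t. 2 / (t + 1) * q)"
    by (intro continuous_intros) auto
  moreover have "(\<lambda>t. 2 / (t + 1) * q) ` {0..} \<subseteq> {0..}"
    using q by auto
  ultimately show "continuous_on {0..} (beta r)"
    using continuous_on_compose2[OF cont_phi] by (simp add: beta_def q_def)
  show "beta r t2 < beta r t1" if "0 \<le> t1" "t1 < t2" for t1 t2
    unfolding beta_def q_def[symmetric]
    using class_K_strict_mono[OF class_Kinf_imp_class_K[OF phi_max_class_Kinf]] that q
    by (simp add: divide_strict_left_mono mult_strict_right_mono)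
  have "filterlim (\<lambda>t::real. 1 + t) at_top at_top"
    by (rule filterlim_tendsto_add_at_top[OF tendsto_const filterlim_ident])
  then have "filterlim (\<lambda>t::real. t + 1) at_top at_top"
    by (simp add: add.commute)
  then have "((\<lambda>t::real. 2 / (t + 1)) \<longlongrightarrow> 0) at_top"
    by (intro tendsto_divide_0[OF tendsto_const] filterlim_at_top_imp_at_infinity)
  then have "((\<lambda>t. 2 / (t + 1) * q) \<longlongrightarrow> 0) at_top"
    by (rule tendsto_mult_left_zero)
  then have "((\<lambda>t. phi_max (2 / (t + 1) * q)) \<longlongrightarrow> phi_max 0) at_top"
    by (rule continuous_on_tendsto_compose[OF cont_phi])
      (use q in \<open>auto simp: eventually_at_top_linorder intro!: exI[of _ 0]\<close>)
  moreover have "beta r = (\<lambda>t. phi_max (2 / (t + 1) * q))"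
    by (simp add: fun_eq_iff beta_def q_def)
  ultimately show "(beta r \<longlongrightarrow> 0) at_top"
    using class_K_0[OF class_Kinf_imp_class_K[OF phi_max_class_Kinf]] by simp
qed

lemma UGAS_chain: "UGAS T"
  unfolding UGAS_def using beta_class_KL UGAS_bound by blast

lemma first_dominating_level:
  assumes "y K i < s i" "K < k" "\<forall>j. s j \<le> y k j"
  shows "\<exists>k'>K. (\<forall>j. s j \<le> y k' j) \<and> (\<exists>j. y (k' - 1) j < s j)"
  using assms(2,3)
proof (induction k rule: int_gr_induct)
  case base
  then show ?case using assms(1) by (intro exI[of _ "K + 1"]) auto
next
  case (step k)
  show ?case
  proof (cases "\<forall>j. s j \<le> y k j")
    case True
    then show ?thesis using step.IH by blast
  next
    case False
    then obtain j where "y k j < s j" by (auto simp: not_le)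
    then show ?thesis using step.hyps step.prems by (intro exI[of _ "k + 1"]) auto
  qed
qed

text \<open>Restricting \<open>s\<close> to the ancestors of \<open>i\<close> does not change \<open>T\<close> on them; the last chain level not
  dominating the restriction yields an ancestor at which \<open>T\<close> strictly decreases \<open>s\<close>.\<close>

lemma decreasing_ancestor:
  assumes s: "nonneg s" and i: "y K i < s i"
  shows "\<exists>j\<in>ancestors Iset i. chain_min K \<le> s j \<and> T s j < s j"
proof -
  define s' where "s' = restr (ancestors Iset i) s"
  have s': "nonneg s'" "s' i = s i"
    using s self_in_ancestors by (auto simp: s'_def restr_def nonneg_def)
  obtain k0 where k0: "K \<le> k0" "\<forall>j. s' j \<le> y k0 j"
    using dominating_level by blast
  then have "K < k0"
    using i s'(2) by (metis order_le_less not_le)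
  then have "\<exists>k>K. (\<forall>j. s' j \<le> y k j) \<and> (\<exists>j. y (k - 1) j < s' j)"
    using first_dominating_level[of K i s' k0] i s'(2) k0(2) by simp
  then obtain k where k: "K < k" "\<forall>j. s' j \<le> y k j" and "\<exists>j. y (k - 1) j < s' j"
    by blast
  then obtain j where j: "y (k - 1) j < s' j" by blast
  have j_anc: "j \<in> ancestors Iset i"
    using j chain_pos[of "k - 1" j] by (auto simp: s'_def restr_def split: if_splits)
  then have s'_j: "s' j = s j" by (simp add: s'_def restr_def)
  have "T s j = T s' j"
    by (rule G_rho_local) (use ancestors_closed[OF j_anc] in \<open>auto simp: s'_def restr_def\<close>)
  also have "\<dots> \<le> T (y (k - 1 + 1)) j"
    using G_rho_mono[OF rho_class_K s'(1)] k(2) by simp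
  also have "\<dots> \<le> y (k - 1) j"
    by (rule chain_decay)
  finally have "T s j < s j"
    using j s'_j by simp
  moreover have "chain_min K \<le> s j"
    using chain_min_le[of K j] chain_mono[of K "k - 1" j] k(1) j s'_j by simp
  ultimately show ?thesis using j_anc by blast
qed

lemma uniform_NJI_chain: "uniform_NJI Iset T"
  unfolding uniform_NJI_def
proof (intro allI impI)
  fix r e :: real assume "0 < r" "0 < e"
  obtain n where n: "\<And>i. ancestors Iset i \<subseteq> in_nbhd Iset i n"
    using ancestors_in_nbhd by blast
  obtain K where K: "\<forall>k\<le>K. \<forall>i. y k i \<le> e / 2"
    using chain_small[of "e / 2"] \<open>0 < e\<close> by auto
  have "\<exists>j\<in>in_nbhd Iset i n. chain_min K \<le> s j \<and> T s j < s j"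
    if "nonneg s" "e \<le> s i" for s i
  proof -
    have "y K i < s i"
      using K[rule_format, of K i] that(2) \<open>0 < e\<close> by simp
    then show ?thesis
      using decreasing_ancestor[OF that(1)] n by blast
  qed
  moreover have "0 < chain_min K"
    using chain_min_attained[of K] chain_pos by metis
  ultimately show "\<exists>n \<delta>. 0 < \<delta> \<and> (\<forall>s i. nonneg s \<longrightarrow> e \<le> s i \<longrightarrow> supn s \<le> r \<longrightarrow>
      (\<exists>j\<in>in_nbhd Iset i n. \<delta> \<le> s j \<and> T s j < s j))"
    by blast
qed

end

lemma (in gain) strict_decay_chain_consequences:
  assumes "class_Kinf \<rho>" "strict_decay_chain (G_rho \<rho>) y"
  shows "uniform_NJI Iset (G_rho \<rho>)" "oplus_MBI (G_rho \<rho>)" "\<exists>\<sigma>. path_strict_decay Iset \<gamma> \<mu> \<sigma>"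
    "UGAS (G_rho \<rho>)"
proof -
  interpret chain_gain Iset \<gamma> \<mu> y \<rho>
    by unfold_locales (use assms gain_operator in \<open>auto simp: strict_decay_chain_def\<close>)
  show "uniform_NJI Iset (G_rho \<rho>)" "oplus_MBI (G_rho \<rho>)" "\<exists>\<sigma>. path_strict_decay Iset \<gamma> \<mu> \<sigma>"
    "UGAS (G_rho \<rho>)"
    using uniform_NJI_chain oplus_MBI_chain path_strict_decay_interp UGAS_chain by blast+
qed

theorem theorem4p15:
  fixes Iset :: "'i::finite \<Rightarrow> 'i set"
    and \<gamma> :: "'i \<Rightarrow> 'i \<Rightarrow> real \<Rightarrow> real"
    and \<mu> :: "'i \<Rightarrow> ('i \<Rightarrow> real) \<Rightarrow> real"
  assumes "gain_operator Iset \<gamma> \<mu>"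
    and "unif_cont_mu \<mu>"
  defines "a \<equiv> (\<exists>\<rho>. class_Kinf \<rho> \<and> NJI (Gam_rho \<rho> Iset \<gamma> \<mu>))"
    and "b \<equiv> (\<exists>\<rho>. class_Kinf \<rho> \<and> uniform_NJI Iset (Gam_rho \<rho> Iset \<gamma> \<mu>))"
    and "c \<equiv> (\<exists>\<rho>. class_Kinf \<rho> \<and> oplus_MBI (Gam_rho \<rho> Iset \<gamma> \<mu>))"
    and "d \<equiv> (\<exists>\<sigma>. path_strict_decay Iset \<gamma> \<mu> \<sigma>)"
    and "e \<equiv> (\<exists>\<rho>. class_Kinf \<rho> \<and> UGAS (Gam_rho \<rho> Iset \<gamma> \<mu>))"
  shows "(a \<longleftrightarrow> b) \<and> (a \<longleftrightarrow> c) \<and> (a \<longleftrightarrow> d) \<and> (a \<longleftrightarrow> e)"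
proof -
  interpret gain Iset \<gamma> \<mu>
    using assms(1) by unfold_locales
  have "b \<and> c \<and> d \<and> e" if a
  proof -
    obtain \<rho> where \<rho>: "class_Kinf \<rho>" "NJI (G_rho \<rho>)"
      using \<open>a\<close> by (auto simp: a_def)
    interpret NJI_gain Iset \<gamma> \<mu> \<rho>
      using assms(2) \<rho> by unfold_locales
    obtain y where "strict_decay_chain T2 y"
      using strict_decay_chain_exists by blast
    then show ?thesis
      using strict_decay_chain_consequences[OF rho2_class_Kinf] rho2_class_Kinf
      unfolding b_def c_def d_def e_def by blast
  qed
  moreover have a if b
    using that uniform_NJI_imp_NJI unfolding a_def b_def by blast
  moreover have a if c
    using that oplus_MBI_imp_NJI unfolding a_def c_def by blast
  moreover have a if d
    using that path_strict_decay_imp_NJI unfolding a_def d_def by blast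
  moreover have a if e
    using that UGAS_G_rho_imp_NJI unfolding a_def e_def by blast
  ultimately show ?thesis by blast
qed

end
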